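(* Assume the setting and Assumptions A1, A2, A3 of the context. Let $n=\ell k+r$ where $\ell,k>1$ are integers and $r\in\{0,1,\dots,k-1\}$. Put $\tilde m=C_1A_1\Phi_{\mathcal C}(k)$, $\tilde\sigma^2=\sigma^2+C_2\Phi_{\mathcal C}(k)$ and $B=A_1^2+A_2$. Then for every $t>0$, \[ \mathbb P\Big(\frac1n\Big\|\sum_{i=1}^nX_i\Big\|\ge t\Big)\le 2\exp\Big(-\frac{\ell\,(t^2-4\tilde m t)}{4\big(\frac{tc}{3}+\tilde\sigma^2B\big)}\Big), \] and equivalently, for every $\nu>0$, \[ \mathbb P\Big(\Big\|\frac1n\sum_{i=1}^nX_i\Big\|\ge 4\tilde m+4\sqrt{\frac{B\tilde\sigma^2\nu}{\ell}}+\frac43\frac{c\nu}{\ell}\Big)\le 2e^{-\nu}. \]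
   Context: Let $(\mathcal B,\|\cdot\|)$ be a separable real Banach space with dual $\mathcal B^\star$ (dual norm $\|\cdot\|_\star$, duality pairing $\langle\cdot,\cdot\rangle$). For $r>0$ let $B(r)$ and $B^\star(r)$ denote the closed balls of radius $r$ centered at $0$ in $\mathcal B$ and $\mathcal B^\star$. Fix $c>0$ and put $\mathcal X=B(c)$. Let $(X_i)_{i\ge1}$ be a stochastic process on a probability space $(\Omega,\mathcal F,\mathbb P)$ with values in $\mathcal X$ which is centered ($\mathbb E X_i=0$ for all $i$, Bochner expectation). Let $\mathcal M_i=\sigma(X_1,\dots,X_i)$. $\mathcal C$-mixing: let $\mathcal C$ be a closed subspace of the Banach space of bounded real-valued functions on $\mathcal X$ (with the supremum norm), let $C(\cdot)$ be a seminorm on $\mathcal C$, and $\mathcal C_1=\{f\in\mathcal C: C(f)\le 1\}$. For integers $k\ge1$ the $\mathcal C$-mixing coefficients are $\Phi_{\mathcal C}(k)=\sup\{\|\mathbb E[\varphi(X_{i+k})\mid\mathcal M_i]-\mathbb E[\varphi(X_{i+k})]\|_{L_\infty(\mathbb P)}:\ \varphi\in\mathcal C_1,\ i\ge1\}$. Gâteaux derivatives: for $f:\mathcal B\to\mathbb R$, $x\in\mathcal B$, $v\in\mathcal B$, $\delta_v f(x)=\frac{d}{dt}\big|_{t=0}f(x+tv)$ when it exists; $\delta_{v,v}f(x)=\frac{d^2}{dt^2}\big|_{t=0}f(x+tv)$ denotes the second Gâteaux differential in direction $v$. Assumption A1: the norm $x\mapsto\|x\|$ is twice Gâteaux differentiable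 at every nonzero $x$ in all directions, and there are constants $A_1\ge1$, $A_2>0$ with $|\delta_v(\|x\|)|\le A_1\|v\|$ and $|\delta_{v,v}(\|x\|)|\le A_2\|v\|^2/\|x\|$ for all $x,v\in\mathcal B$, $x\ne0$. Assumption A2: there are constants $c,\sigma^2>0$ with $\|X_i\|\le c$ a.s. and $\mathbb E\|X_i\|^2\le\sigma^2$ for all $i$. Assumption A3: for each $s\in\mathcal B^\star$ the function $h_{1,s}(x)=\langle s,x\rangle$ (restricted to $\mathcal X$) belongs to $\mathcal C$, the function $h_2(x)=\|x\|^2$ belongs to $\mathcal C$, and $\sup_{s\in B^\star(1)}C(h_{1,s})\le C_1$, $C(h_2)\le C_2$ for constants $C_1,C_2\ge0$. *)

theory Defs
  imports "HOL-Analysis.Analysis" "HOL-Probability.Probability"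
begin

definition gateaux1 :: "('b::real_normed_vector \<Rightarrow> real) \<Rightarrow> 'b \<Rightarrow> 'b \<Rightarrow> real" where
  "gateaux1 f x v = deriv (\<lambda>t. f (x + t *\<^sub>R v)) 0"

definition gateaux2 :: "('b::real_normed_vector \<Rightarrow> real) \<Rightarrow> 'b \<Rightarrow> 'b \<Rightarrow> real" where
  "gateaux2 f x v = deriv (\<lambda>t. deriv (\<lambda>s. f (x + s *\<^sub>R v)) t) 0"

definition twice_gateaux_diff :: "('b::real_normed_vector \<Rightarrow> real) \<Rightarrow> 'b \<Rightarrow> 'b \<Rightarrow> bool" where
  "twice_gateaux_diff f x v \<longleftrightarrow>
     (\<forall>\<^sub>F t in nhds 0. (\<lambda>s. f (x + s *\<^sub>R v)) differentiable (at t)) \<and>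
     (\<lambda>t. deriv (\<lambda>s. f (x + s *\<^sub>R v)) t) differentiable (at 0)"

definition nat_filtr :: "'w measure \<Rightarrow> (nat \<Rightarrow> 'w \<Rightarrow> 'b::topological_space) \<Rightarrow> nat \<Rightarrow> 'w measure" where
  "nat_filtr M X i = sigma (space M)
     {X j -` A \<inter> space M | j A. j \<in> {1..i} \<and> A \<in> sets borel}"

text \<open>C-mixing coefficients (as extended reals; L_infinity norm = essential supremum of the
  absolute value).  Test functions phi range over C_1 = {f in Cset. Cnorm f <= 1}.\<close>

definition C_mixing_coeff ::
  "'w measure \<Rightarrow> (nat \<Rightarrow> 'w \<Rightarrow> 'b::topological_space) \<Rightarrow> ('b \<Rightarrow> real) set \<Rightarrow> (('b \<Rightarrow> real) \<Rightarrow> real)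
     \<Rightarrow> nat \<Rightarrow> ereal" where
  "C_mixing_coeff M X Cset Cnorm k =
     (SUP p \<in> {(\<phi>, i). \<phi> \<in> Cset \<and> Cnorm \<phi> \<le> 1 \<and> i \<ge> 1}.
        esssup M (\<lambda>\<omega>. ereal \<bar>real_cond_exp M (nat_filtr M X (snd p)) (\<lambda>\<omega>'. fst p (X (snd p + k) \<omega>')) \<omega>
                      - (\<integral>\<omega>'. fst p (X (snd p + k) \<omega>') \<partial>M)\<bar>))"

end

theory Submission
  imports Defs
begin

text \<open>A Chernoff bound for \<open>x \<mapsto> cosh (\<lambda> \<parallel>x\<parallel>)\<close>. By A1 this function has a second order
  expansion along lines whose remainder is at most \<open>\<lambda>\<^sup>2 B \<parallel>w\<parallel>\<^sup>2 cosh (\<lambda> \<parallel>x\<parallel>) exp (\<lambda> \<parallel>w\<parallel>) / 2\<close>.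
  Split the sum into the \<open>k\<close> progressions \<open>j, j + k, j + 2k, \<dots>\<close>. Adding the next term
  \<open>X\<^sub>i\<^sub>+\<^sub>k\<close> to an \<open>\<M>\<^sub>i\<close>-measurable partial sum multiplies \<open>E cosh (\<mu> \<parallel>\<cdot>\<parallel>)\<close> by at most
  \<open>rho \<mu>\<close>: the first order term is a bounded linear functional of the centred \<open>X\<^sub>i\<^sub>+\<^sub>k\<close>, the
  second order term is \<open>\<parallel>X\<^sub>i\<^sub>+\<^sub>k\<parallel>\<^sup>2\<close>, and by A3 the mixing coefficient controls both
  covariances. A progression of length \<open>L \<ge> \<ell>\<close> thus has \<open>E cosh \<le> rho\<^sup>L \<le> exp (L (rho - 1))\<close>;
  convexity of cosh combines the progressions, Markov's inequality gives the tail bound, and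
  optimizing \<open>\<lambda>\<close> gives its Bernstein form.\<close>

lemma sinh_real_ge_self: "0 \<le> (z::real) \<Longrightarrow> z \<le> sinh z"
proof (cases "z = 0")
  case False
  assume "0 \<le> z"
  with False have "0 < z" by simp
  have "\<And>x. DERIV sinh x :> cosh x" by (auto intro!: derivative_eq_intros)
  then obtain \<xi> where "sinh z - sinh 0 = (z - 0) * cosh \<xi>"
    using MVT2[of 0 z sinh cosh] \<open>0 < z\<close> by blast
  moreover have "cosh \<xi> \<ge> 1" by (rule cosh_real_ge_1)
  ultimately show ?thesis using \<open>0 < z\<close> by (simp add: mult_le_cancel_left1)
qed simp

lemma sinh_real_le_mult_cosh: "0 \<le> (z::real) \<Longrightarrow> sinh z \<le> z * cosh z"
proof (cases "z = 0")
  case False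
  assume "0 \<le> z"
  with False have "0 < z" by simp
  have "\<And>x. DERIV sinh x :> cosh x" by (auto intro!: derivative_eq_intros)
  then obtain \<xi> where "0 < \<xi>" "\<xi> < z" "sinh z - sinh 0 = (z - 0) * cosh \<xi>"
    using MVT2[of 0 z sinh cosh] \<open>0 < z\<close> by blast
  moreover have "cosh \<xi> \<le> cosh z" using \<open>0 < \<xi>\<close> \<open>\<xi> < z\<close> cosh_real_nonneg_le_iff by simp
  ultimately show ?thesis using \<open>0 < z\<close> by (simp add: mult_le_cancel_left)
qed simp

lemma exp_minus_one_minus_le: "0 \<le> (a::real) \<Longrightarrow> exp a - 1 - a \<le> a\<^sup>2 * exp a / 2"
proof -
  assume a: "0 \<le> a"
  obtain t where t: "\<bar>t\<bar> \<le> \<bar>a\<bar>" "exp a = (\<Sum>m<2. (a ^ m) / fact m) + (exp t / fact 2) * a ^ 2"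
    using Maclaurin_exp_le[of a 2] by blast
  have "exp t * a\<^sup>2 \<le> exp a * a\<^sup>2" using t(1) a by (simp add: mult_right_mono)
  with t(2) show ?thesis by (simp add: numeral_2_eq_2 field_simps)
qed

lemma cosh_add_le: "0 \<le> (a::real) \<Longrightarrow> cosh (y + a) \<le> cosh y + a * sinh y + cosh y * (exp a - 1 - a)"
proof -
  assume a: "0 \<le> a"
  have "cosh y + a * sinh y + cosh y * (exp a - 1 - a) - cosh (y + a) = (cosh y - sinh y) * (sinh a - a)"
    by (simp add: cosh_add cosh_plus_sinh[symmetric] algebra_simps)
  moreover have "cosh y - sinh y \<ge> 0" using sinh_le_cosh_real[of y] by simp
  moreover have "sinh a - a \<ge> 0" using sinh_real_ge_self[OF a] by simp
  ultimately show ?thesis by (metis diff_ge_0_iff_ge mult_nonneg_nonneg)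
qed

lemma cosh_add_le_mult_exp: "0 \<le> (q::real) \<Longrightarrow> cosh (p + q) \<le> cosh p * exp q"
proof -
  assume q: "0 \<le> q"
  have "sinh p * sinh q \<le> cosh p * sinh q"
    using sinh_le_cosh_real[of p] q by (simp add: mult_right_mono)
  then have "cosh (p + q) \<le> cosh p * cosh q + cosh p * sinh q" by (simp add: cosh_add)
  also have "\<dots> = cosh p * exp q" by (simp add: distrib_left[symmetric] cosh_plus_sinh)
  finally show ?thesis .
qed

lemma cosh_sum_convex:
  fixes w a :: "'i \<Rightarrow> real"
  assumes "finite S" "S \<noteq> {}" "sum w S = 1" "\<And>i. i \<in> S \<Longrightarrow> 0 \<le> w i"
  shows "cosh (\<Sum>i\<in>S. w i * a i) \<le> (\<Sum>i\<in>S. w i * cosh (a i))"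
proof -
  have "exp (\<Sum>i\<in>S. w i * a i) \<le> (\<Sum>i\<in>S. w i * exp (a i))"
    using convex_on_sum[OF assms(1,2) exp_convex assms(3), of a] assms(4) by simp
  moreover have "exp (- (\<Sum>i\<in>S. w i * a i)) \<le> (\<Sum>i\<in>S. w i * exp (- a i))"
    using convex_on_sum[OF assms(1,2) exp_convex assms(3), of "\<lambda>i. - a i"] assms(4)
    by (simp add: sum_negf)
  ultimately have "cosh (\<Sum>i\<in>S. w i * a i) \<le> ((\<Sum>i\<in>S. w i * exp (a i)) + (\<Sum>i\<in>S. w i * exp (- a i))) / 2"
    by (simp add: cosh_def)
  also have "\<dots> = (\<Sum>i\<in>S. w i * cosh (a i))"
    by (simp add: cosh_def sum.distrib[symmetric] sum_divide_distrib distrib_left add_divide_distrib)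
  finally show ?thesis .
qed

section \<open>Gateaux derivatives of the norm\<close>

lemma gateaux1_along_line:
  "gateaux1 f (x + t *\<^sub>R w) w = deriv (\<lambda>s. f (x + s *\<^sub>R w)) t"
  by (simp add: gateaux1_def deriv_shift_0[of _ t] o_def algebra_simps)

lemma gateaux2_along_line:
  "gateaux2 f (x + t *\<^sub>R w) w = deriv (deriv (\<lambda>s. f (x + s *\<^sub>R w))) t"
proof -
  have "deriv (\<lambda>s. f ((x + t *\<^sub>R w) + s *\<^sub>R w)) r = deriv (\<lambda>s. f (x + s *\<^sub>R w)) (t + r)" for r
    using gateaux1_along_line[of f "x + t *\<^sub>R w" r w] gateaux1_along_line[of f x "t + r" w]
    by (simp add: algebra_simps)
  then show ?thesis by (simp add: gateaux2_def deriv_shift_0[of _ t] o_def)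
qed

lemma twice_gateaux_diff_along_line:
  assumes "twice_gateaux_diff f (x + t *\<^sub>R w) w"
  defines "\<phi> \<equiv> \<lambda>s. f (x + s *\<^sub>R w)"
  shows "(\<phi> has_real_derivative deriv \<phi> t) (at t)"
    and "(deriv \<phi> has_real_derivative deriv (deriv \<phi>) t) (at t)"
proof -
  have shift: "(\<lambda>s. f ((x + t *\<^sub>R w) + s *\<^sub>R w)) = (\<lambda>s. \<phi> (s + t))"
    unfolding \<phi>_def by (simp add: algebra_simps)
  have shift': "deriv (\<lambda>s. f ((x + t *\<^sub>R w) + s *\<^sub>R w)) = (\<lambda>s. deriv \<phi> (s + t))"
    using gateaux1_along_line[of f x, symmetric] gateaux1_along_line[of f "x + t *\<^sub>R w" _ w]
    unfolding \<phi>_def by (auto simp: algebra_simps)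
  from assms(1) have "\<forall>\<^sub>F s in nhds 0. (\<lambda>s. \<phi> (s + t)) differentiable (at s)"
    unfolding twice_gateaux_diff_def shift by blast
  then have "(\<lambda>s. \<phi> (s + t)) differentiable (at 0)" using eventually_nhds_x_imp_x by blast
  then show "(\<phi> has_real_derivative deriv \<phi> t) (at t)"
    using DERIV_shift[of \<phi> _ 0 t] deriv_shift_0[of \<phi> t]
    by (simp add: DERIV_deriv_iff_real_differentiable o_def add.commute)
  from assms(1) have "(\<lambda>s. deriv \<phi> (s + t)) differentiable (at 0)"
    unfolding twice_gateaux_diff_def shift' by blast
  then show "(deriv \<phi> has_real_derivative deriv (deriv \<phi>) t) (at t)"
    using DERIV_shift[of "deriv \<phi>" _ 0 t] deriv_shift_0[of "deriv \<phi>" t]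
    by (simp add: DERIV_deriv_iff_real_differentiable o_def add.commute)
qed

lemma gateaux1_has_real_derivative:
  assumes "twice_gateaux_diff f x v"
  shows "((\<lambda>t. f (x + t *\<^sub>R v)) has_real_derivative gateaux1 f x v) (at 0)"
  using twice_gateaux_diff_along_line(1)[of f x 0 v] assms gateaux1_along_line[of f x 0 v] by simp

lemma gateaux1_scaleR:
  assumes "twice_gateaux_diff f x v"
  shows "gateaux1 f x (a *\<^sub>R v) = a * gateaux1 f x v"
proof -
  have d: "((\<lambda>t. f (x + t *\<^sub>R v)) has_real_derivative gateaux1 f x v) (at (a * 0))"
    using gateaux1_has_real_derivative[OF assms] by simp
  have "((\<lambda>t. f (x + (a * t) *\<^sub>R v)) has_real_derivative gateaux1 f x v * a) (at 0)"
    using DERIV_chain2[where g="\<lambda>t. a * t" and x=0 and s=UNIV, OF d]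
    by (auto intro: derivative_eq_intros)
  then have "((\<lambda>t. f (x + t *\<^sub>R (a *\<^sub>R v))) has_real_derivative gateaux1 f x v * a) (at 0)"
    by (simp add: mult.commute)
  then show ?thesis unfolding gateaux1_def by (simp add: DERIV_imp_deriv mult.commute)
qed

lemma gateaux1_norm_add_le:
  assumes "\<And>v. twice_gateaux_diff norm (x::'b::real_normed_vector) v"
  shows "gateaux1 norm x (v + w) \<le> gateaux1 norm x v + gateaux1 norm x w"
proof -
  let ?q = "\<lambda>u t. (norm (x + t *\<^sub>R u) - norm x) / t"
  have lim: "(?q u \<longlongrightarrow> gateaux1 norm x u) (at_right 0)" for u
  proof -
    have "((\<lambda>t. (norm (x + t *\<^sub>R u) - norm (x + 0 *\<^sub>R u)) / (t - 0)) \<longlongrightarrow> gateaux1 norm x u) (at 0)"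
      using gateaux1_has_real_derivative[OF assms[of u]] unfolding has_field_derivative_iff by simp
    then show ?thesis by (auto elim: tendsto_mono[OF at_le, rotated])
  qed
  have avg: "((\<lambda>t. (?q (2 *\<^sub>R v) t + ?q (2 *\<^sub>R w) t) / 2)
      \<longlongrightarrow> (gateaux1 norm x (2 *\<^sub>R v) + gateaux1 norm x (2 *\<^sub>R w)) / 2) (at_right 0)"
    by (intro tendsto_intros lim) simp
  have convex: "\<forall>\<^sub>F t in at_right 0. ?q (v + w) t \<le> (?q (2 *\<^sub>R v) t + ?q (2 *\<^sub>R w) t) / 2"
  proof (rule eventually_at_rightI[of 0 1])
    fix t :: real assume t: "t \<in> {0<..<1}"
    have eq: "x + t *\<^sub>R (v + w) = (1/2) *\<^sub>R (x + t *\<^sub>R (2 *\<^sub>R v)) + (1/2) *\<^sub>R (x + t *\<^sub>R (2 *\<^sub>R w))"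
      by (simp add: algebra_simps scaleR_add_left[symmetric])
    have "norm (x + t *\<^sub>R (v + w)) \<le> (1/2) * norm (x + t *\<^sub>R (2 *\<^sub>R v)) + (1/2) * norm (x + t *\<^sub>R (2 *\<^sub>R w))"
      unfolding eq by (rule order.trans[OF norm_triangle_ineq]) auto
    then have "norm (x + t *\<^sub>R (v + w)) - norm x
        \<le> ((norm (x + t *\<^sub>R (2 *\<^sub>R v)) - norm x) + (norm (x + t *\<^sub>R (2 *\<^sub>R w)) - norm x)) / 2"
      by simp
    then have "?q (v + w) t \<le> (((norm (x + t *\<^sub>R (2 *\<^sub>R v)) - norm x)
        + (norm (x + t *\<^sub>R (2 *\<^sub>R w)) - norm x)) / 2) / t"
      using t by (intro divide_right_mono) auto
    then show "?q (v + w) t \<le> (?q (2 *\<^sub>R v) t + ?q (2 *\<^sub>R w) t) / 2"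
      by (simp add: add_divide_distrib diff_divide_distrib mult.commute)
  qed simp
  have "gateaux1 norm x (v + w) \<le> (gateaux1 norm x (2 *\<^sub>R v) + gateaux1 norm x (2 *\<^sub>R w)) / 2"
    by (rule tendsto_le[OF _ avg lim convex]) simp
  then show ?thesis using gateaux1_scaleR[OF assms, of 2] by simp
qed

lemma gateaux1_norm_bounded_linear:
  assumes "\<And>v. twice_gateaux_diff norm (x::'b::real_normed_vector) v"
    and "\<And>v. \<bar>gateaux1 norm x v\<bar> \<le> A * norm v" and "0 \<le> A"
  shows "bounded_linear (gateaux1 norm x)" "onorm (gateaux1 norm x) \<le> A"
proof -
  have add: "gateaux1 norm x (v + w) = gateaux1 norm x v + gateaux1 norm x w" for v w
    using gateaux1_norm_add_le[OF assms(1), of "v + w" "(-1) *\<^sub>R w"]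
      gateaux1_norm_add_le[OF assms(1), of v w] gateaux1_scaleR[OF assms(1), of "-1" w]
    by simp
  show "bounded_linear (gateaux1 norm x)"
    by (rule bounded_linear_intro[where K = A])
      (auto simp: add gateaux1_scaleR[OF assms(1)] mult.commute assms(2))
  show "onorm (gateaux1 norm x) \<le> A"
    by (intro onorm_bound assms(3)) (auto intro: order.trans[OF abs_ge_self] assms(2))
qed

section \<open>A second order bound for cosh of the norm\<close>

text \<open>The norm has no derivative at 0. Setting it to 0 there keeps \<open>norm_deriv y\<close> linear for
  every \<open>y\<close>; the value is irrelevant in the expansion, where it is multiplied by \<open>sinh 0 = 0\<close>.\<close>

definition norm_deriv :: "'b::real_normed_vector \<Rightarrow> 'b \<Rightarrow> real" where
  "norm_deriv y v = (if y = 0 then 0 else gateaux1 norm y v)"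

lemma cosh_second_derivative_le:
  fixes p d1 d2 lam A1 A2 W :: real
  assumes p: "0 < p" and lam: "0 \<le> lam" and A2: "0 \<le> A2"
    and d1: "\<bar>d1\<bar> \<le> A1 * W" and d2: "\<bar>d2\<bar> \<le> A2 * W\<^sup>2 / p"
  shows "lam\<^sup>2 * cosh (lam * p) * d1\<^sup>2 + lam * sinh (lam * p) * d2 \<le> lam\<^sup>2 * (A1\<^sup>2 + A2) * W\<^sup>2 * cosh (lam * p)"
proof -
  have "d1\<^sup>2 \<le> (A1 * W)\<^sup>2"
    using d1 by (metis abs_ge_zero power2_abs power_mono)
  then have t1: "lam\<^sup>2 * cosh (lam * p) * d1\<^sup>2 \<le> lam\<^sup>2 * cosh (lam * p) * (A1 * W)\<^sup>2"
    by (intro mult_left_mono) auto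
  have s: "0 \<le> sinh (lam * p)" using lam p by simp
  have "lam * sinh (lam * p) * d2 \<le> lam * sinh (lam * p) * (A2 * W\<^sup>2 / p)"
    using s lam d2 by (intro mult_left_mono) auto
  also have "\<dots> = (lam * sinh (lam * p) / p) * (A2 * W\<^sup>2)" by simp
  also have "\<dots> \<le> (lam\<^sup>2 * cosh (lam * p)) * (A2 * W\<^sup>2)"
  proof (rule mult_right_mono)
    have "lam * sinh (lam * p) \<le> lam * ((lam * p) * cosh (lam * p))"
      using lam p by (intro mult_left_mono sinh_real_le_mult_cosh) auto
    then show "lam * sinh (lam * p) / p \<le> lam\<^sup>2 * cosh (lam * p)"
      using p by (simp add: divide_le_eq power2_eq_square mult_ac)
  qed (use A2 in simp)
  finally have t2: "lam * sinh (lam * p) * d2 \<le> lam\<^sup>2 * cosh (lam * p) * (A2 * W\<^sup>2)" .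
  have "lam\<^sup>2 * cosh (lam * p) * (A1 * W)\<^sup>2 + lam\<^sup>2 * cosh (lam * p) * (A2 * W\<^sup>2)
      = lam\<^sup>2 * (A1\<^sup>2 + A2) * W\<^sup>2 * cosh (lam * p)"
    by (simp add: algebra_simps power_mult_distrib)
  with t1 t2 show ?thesis by linarith
qed

lemma cosh_norm_taylor_avoiding_zero:
  fixes x w :: "'b::real_normed_vector"
  assumes nz: "\<And>t. x + t *\<^sub>R w \<noteq> 0"
    and diff: "\<And>t. twice_gateaux_diff norm (x + t *\<^sub>R w) w"
    and d1: "\<And>t. \<bar>gateaux1 norm (x + t *\<^sub>R w) w\<bar> \<le> A1 * norm w"
    and d2: "\<And>t. \<bar>gateaux2 norm (x + t *\<^sub>R w) w\<bar> \<le> A2 * (norm w)\<^sup>2 / norm (x + t *\<^sub>R w)"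
    and A2: "0 \<le> A2" and lam: "0 \<le> lam"
  shows "cosh (lam * norm (x + w)) \<le> cosh (lam * norm x) + lam * sinh (lam * norm x) * gateaux1 norm x w
           + (lam\<^sup>2 * (A1\<^sup>2 + A2) * (norm w)\<^sup>2 / 2) * cosh (lam * norm x) * exp (lam * norm w)"
proof -
  define \<phi> where "\<phi> = (\<lambda>t. norm (x + t *\<^sub>R w))"
  define \<phi>1 where "\<phi>1 = deriv \<phi>"
  define \<phi>2 where "\<phi>2 = deriv \<phi>1"
  have D\<phi>: "DERIV \<phi> t :> \<phi>1 t" "DERIV \<phi>1 t :> \<phi>2 t" for t
    using twice_gateaux_diff_along_line[OF diff[of t]] unfolding \<phi>_def \<phi>1_def \<phi>2_def by auto
  have \<phi>_pos: "\<phi> t > 0" for t unfolding \<phi>_def using nz by simp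
  define h0 where "h0 = (\<lambda>t. cosh (lam * \<phi> t))"
  define h1 where "h1 = (\<lambda>t. lam * sinh (lam * \<phi> t) * \<phi>1 t)"
  define h2 where "h2 = (\<lambda>t. lam\<^sup>2 * cosh (lam * \<phi> t) * (\<phi>1 t)\<^sup>2 + lam * sinh (lam * \<phi> t) * \<phi>2 t)"
  define dd where "dd = (\<lambda>m::nat. if m = 0 then h0 else if m = 1 then h1 else h2)"
  have "DERIV h0 t :> h1 t" "DERIV h1 t :> h2 t" for t
    unfolding h0_def h1_def h2_def using D\<phi>[of t]
    by (auto intro!: derivative_eq_intros simp: algebra_simps power2_eq_square)
  then have "\<forall>m t. m < 2 \<and> 0 \<le> t \<and> t \<le> 1 \<longrightarrow> DERIV (dd m) t :> dd (Suc m) t"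
    unfolding dd_def by (auto simp: less_2_cases_iff)
  from Maclaurin[of 1 2 dd h0, OF _ _ _ this] obtain \<xi> where \<xi>: "0 < \<xi>" "\<xi> < 1"
    "h0 1 = (\<Sum>m<2. (dd m 0 / fact m) * 1 ^ m) + (dd 2 \<xi> / fact 2) * 1 ^ 2"
    unfolding dd_def by auto
  then have taylor: "h0 1 = h0 0 + h1 0 + h2 \<xi> / 2"
    unfolding dd_def by (simp add: numeral_2_eq_2)
  have "h2 \<xi> \<le> lam\<^sup>2 * (A1\<^sup>2 + A2) * (norm w)\<^sup>2 * cosh (lam * \<phi> \<xi>)"
    unfolding h2_def using d1[of \<xi>] d2[of \<xi>] \<phi>_pos[of \<xi>] A2 lam
    by (intro cosh_second_derivative_le) (auto simp: gateaux1_along_line gateaux2_along_line \<phi>_def \<phi>1_def \<phi>2_def)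
  also have "\<dots> \<le> lam\<^sup>2 * (A1\<^sup>2 + A2) * (norm w)\<^sup>2 * (cosh (lam * norm x) * exp (lam * norm w))"
  proof (intro mult_left_mono)
    have "\<phi> \<xi> \<le> norm x + norm w"
      using norm_triangle_ineq[of x "\<xi> *\<^sub>R w"] \<xi> mult_left_le_one_le[of "norm w" \<xi>]
      unfolding \<phi>_def by simp
    then have "cosh (lam * \<phi> \<xi>) \<le> cosh (lam * norm x + lam * norm w)"
      using lam \<phi>_pos[of \<xi>] by (subst cosh_real_nonneg_le_iff) (auto simp: mult_left_mono distrib_left[symmetric])
    also have "\<dots> \<le> cosh (lam * norm x) * exp (lam * norm w)"
      using lam by (intro cosh_add_le_mult_exp) simp
    finally show "cosh (lam * \<phi> \<xi>) \<le> cosh (lam * norm x) * exp (lam * norm w)" .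
  qed (use A2 in simp)
  finally show ?thesis
    using taylor unfolding h0_def h1_def \<phi>_def \<phi>1_def
    by (simp add: gateaux1_along_line[of norm x 0, simplified, symmetric] mult.assoc)
qed

lemma cosh_norm_taylor_through_zero:
  fixes x w :: "'b::real_normed_vector"
  assumes t0: "x + t0 *\<^sub>R w = 0"
    and diff: "x \<noteq> 0 \<Longrightarrow> twice_gateaux_diff norm x w"
    and B: "1 \<le> B" and lam: "0 \<le> lam"
  shows "cosh (lam * norm (x + w)) \<le> cosh (lam * norm x) + lam * sinh (lam * norm x) * norm_deriv x w
           + (lam\<^sup>2 * B * (norm w)\<^sup>2 / 2) * cosh (lam * norm x) * exp (lam * norm w)"
proof -
  define a where "a = lam * norm w"
  define y where "y = - a * t0"
  have a: "0 \<le> a" unfolding a_def using lam by simp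
  have along: "lam * norm (x + t *\<^sub>R w) = a * \<bar>t - t0\<bar>" for t
  proof -
    have "x + t *\<^sub>R w = (t - t0) *\<^sub>R w" using t0 by (simp add: algebra_simps eq_neg_iff_add_eq_0)
    then show ?thesis unfolding a_def by (simp add: mult_ac)
  qed
  have cosh_along: "cosh (lam * norm (x + t *\<^sub>R w)) = cosh (a * (t - t0))" for t
    unfolding along by (metis abs_mult abs_of_nonneg a cosh_real_abs)
  have at0: "cosh (lam * norm x) = cosh y" and at1: "cosh (lam * norm (x + w)) = cosh (y + a)"
    using cosh_along[of 0] cosh_along[of 1] unfolding y_def by (simp_all add: algebra_simps)
  have lin: "lam * sinh (lam * norm x) * norm_deriv x w = a * sinh y"
  proof (cases "x = 0")
    case True
    then show ?thesis using along[of 0] a unfolding norm_deriv_def y_def by (auto simp: mult_ac)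
  next
    case False
    let ?h = "\<lambda>t. cosh (lam * norm (x + t *\<^sub>R w))"
    have "(?h has_real_derivative (sinh (lam * norm (x + 0 *\<^sub>R w)) * (lam * gateaux1 norm x w))) (at 0)"
      using gateaux1_has_real_derivative[OF diff[OF False]] by (auto intro!: derivative_eq_intros)
    moreover have "(?h has_real_derivative (sinh (a * (0 - t0)) * a)) (at 0)"
      unfolding cosh_along by (auto intro!: derivative_eq_intros)
    ultimately have "sinh (lam * norm x) * (lam * gateaux1 norm x w) = sinh (a * (0 - t0)) * a"
      by (simp add: DERIV_unique)
    then show ?thesis using False unfolding y_def norm_deriv_def by (simp add: algebra_simps)
  qed
  have "lam\<^sup>2 * (norm w)\<^sup>2 * 1 \<le> lam\<^sup>2 * (norm w)\<^sup>2 * B"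
    using B by (intro mult_left_mono) auto
  then have "a\<^sup>2 \<le> lam\<^sup>2 * B * (norm w)\<^sup>2"
    unfolding a_def by (simp add: power_mult_distrib mult_ac)
  then have "cosh y * (a\<^sup>2 * exp a / 2) \<le> (lam\<^sup>2 * B * (norm w)\<^sup>2 / 2) * cosh y * exp a"
    by (simp add: mult_right_mono mult.commute mult.left_commute divide_right_mono)
  moreover have "cosh y * (exp a - 1 - a) \<le> cosh y * (a\<^sup>2 * exp a / 2)"
    by (intro mult_left_mono exp_minus_one_minus_le a) simp
  moreover have "cosh (y + a) \<le> cosh y + a * sinh y + cosh y * (exp a - 1 - a)"
    by (rule cosh_add_le[OF a])
  ultimately show ?thesis unfolding at0 at1 lin a_def[symmetric] by linarith
qed

lemma cosh_norm_taylor: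
  fixes x w :: "'b::real_normed_vector"
  assumes diff: "\<And>(y::'b) v. y \<noteq> 0 \<Longrightarrow> twice_gateaux_diff norm y v"
    and d1: "\<And>(y::'b) v. y \<noteq> 0 \<Longrightarrow> \<bar>gateaux1 norm y v\<bar> \<le> A1 * norm v"
    and d2: "\<And>(y::'b) v. y \<noteq> 0 \<Longrightarrow> \<bar>gateaux2 norm y v\<bar> \<le> A2 * (norm v)\<^sup>2 / norm y"
    and A1: "1 \<le> A1" and A2: "0 \<le> A2" and lam: "0 \<le> lam"
  shows "cosh (lam * norm (x + w)) \<le> cosh (lam * norm x) + lam * sinh (lam * norm x) * norm_deriv x w
           + (lam\<^sup>2 * (A1\<^sup>2 + A2) * (norm w)\<^sup>2 / 2) * cosh (lam * norm x) * exp (lam * norm w)"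
proof (cases "\<exists>t0. x + t0 *\<^sub>R w = 0")
  case True
  then obtain t0 where t0: "x + t0 *\<^sub>R w = 0" by blast
  have "1 \<le> A1\<^sup>2 + A2" using A1 A2 by (smt (verit) one_le_power)
  from cosh_norm_taylor_through_zero[OF t0 diff this lam] show ?thesis .
next
  case False
  then have nz: "\<And>t. x + t *\<^sub>R w \<noteq> 0" by blast
  then have "norm_deriv x w = gateaux1 norm x w"
    unfolding norm_deriv_def by (metis add_0_right scale_zero_left)
  with cosh_norm_taylor_avoiding_zero[OF nz diff[OF nz] d1[OF nz] d2[OF nz] A2 lam]
  show ?thesis by simp
qed

lemma subalgebra_nat_filtr:
  assumes "\<And>i. X i \<in> borel_measurable M"
  shows "subalgebra M (nat_filtr M X i)"
proof -
  let ?G = "{X j -` A \<inter> space M | j A. j \<in> {1..i} \<and> A \<in> sets borel}"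
  have G: "?G \<subseteq> sets M" using assms by (auto simp: measurable_sets)
  then have "?G \<subseteq> Pow (space M)" using sets.sets_into_space by blast
  then have "space (nat_filtr M X i) = space M" "sets (nat_filtr M X i) = sigma_sets (space M) ?G"
    unfolding nat_filtr_def by (simp_all add: sets_measure_of)
  with G show ?thesis unfolding subalgebra_def by (simp add: sets.sigma_sets_subset)
qed

lemma measurable_nat_filtr:
  assumes "1 \<le> j" "j \<le> i"
  shows "X j \<in> borel_measurable (nat_filtr M X i)"
proof (rule measurableI)
  let ?G = "{X j -` A \<inter> space M | j A. j \<in> {1..i} \<and> A \<in> sets borel}"
  have G: "?G \<subseteq> Pow (space M)" by auto
  then show "\<And>x. x \<in> space (nat_filtr M X i) \<Longrightarrow> X j x \<in> space borel"
    by simp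
  fix A :: "'b set" assume "A \<in> sets borel"
  with assms have "X j -` A \<inter> space M \<in> sigma_sets (space M) ?G"
    by (intro sigma_sets.Basic) auto
  then show "X j -` A \<inter> space (nat_filtr M X i) \<in> sets (nat_filtr M X i)"
    unfolding nat_filtr_def using G by (simp add: sets_measure_of)
qed

fun snap_to :: "(nat \<Rightarrow> 'a::real_normed_vector) \<Rightarrow> real \<Rightarrow> nat \<Rightarrow> 'a \<Rightarrow> 'a" where
  "snap_to d \<delta> 0 y = 0"
| "snap_to d \<delta> (Suc N) y = (if dist y (d N) < \<delta> then d N else snap_to d \<delta> N y)"

lemma snap_to_near: "dist y (snap_to d \<delta> N y) < \<delta> \<or> snap_to d \<delta> N y = 0"
  by (induction N) auto

lemma snap_to_near_if: "\<exists>j<N. dist y (d j) < \<delta> \<Longrightarrow> dist y (snap_to d \<delta> N y) < \<delta>"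
  by (induction N) (auto simp: less_Suc_eq)

lemma range_snap_to: "range (snap_to d \<delta> N) \<subseteq> insert 0 (d ` {..<N})"
proof -
  have "snap_to d \<delta> N y \<in> insert 0 (d ` {..<N})" for y by (induction N) auto
  then show ?thesis by blast
qed

lemma borel_measurable_snap_to: "snap_to d \<delta> N \<in> borel_measurable borel"
proof (induction N)
  case (Suc N)
  have "{y \<in> space borel. dist y (d N) < \<delta>} \<in> sets borel"
    using borel_open[OF open_ball[of "d N" \<delta>]] by (simp add: ball_def dist_commute)
  then show ?case by (simp add: measurable_If Suc)
qed simp

lemma finite_range_approx:
  fixes Y :: "'w \<Rightarrow> 'b::{real_normed_vector, second_countable_topology}"
  assumes Y: "Y \<in> borel_measurable N" and sub: "subalgebra M N" and fm: "finite_measure M"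
    and d: "0 < \<delta>" and e: "0 < \<epsilon>"
  shows "\<exists>Y'. Y' \<in> borel_measurable N \<and> finite (range Y') \<and>
          (\<forall>\<omega>. dist (Y \<omega>) (Y' \<omega>) < \<delta> \<or> Y' \<omega> = 0) \<and>
          measure M {\<omega> \<in> space M. \<not> dist (Y \<omega>) (Y' \<omega>) < \<delta>} \<le> \<epsilon>"
proof -
  interpret finite_measure M by fact
  obtain D :: "'b set" where D: "countable D" "\<And>U. open U \<Longrightarrow> U \<noteq> {} \<Longrightarrow> \<exists>d\<in>D. d \<in> U"
    using countable_dense_exists by blast
  then have "D \<noteq> {}" by blast
  define dd where "dd = from_nat_into D"
  have rng: "range dd = D" unfolding dd_def using range_from_nat_into[OF \<open>D \<noteq> {}\<close> D(1)] .
  define miss where "miss K = {\<omega> \<in> space M. \<forall>j<K. \<not> dist (Y \<omega>) (dd j) < \<delta>}" for K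
  have [measurable]: "Y \<in> borel_measurable M" using measurable_from_subalg[OF sub Y] .
  have miss_sets: "miss K \<in> sets M" for K
  proof -
    have "miss K = (\<Inter>j<K. {\<omega> \<in> space M. \<not> dist (Y \<omega>) (dd j) < \<delta>}) \<inter> space M"
      unfolding miss_def by auto
    also have "\<dots> \<in> sets M" by measurable
    finally show ?thesis .
  qed
  have "(\<Inter>K. miss K) = {}"
  proof (rule ccontr)
    assume "(\<Inter>K. miss K) \<noteq> {}"
    then obtain \<omega> where \<omega>: "\<And>K. \<omega> \<in> miss K" by blast
    obtain j where "dd j \<in> ball (Y \<omega>) \<delta>" using D(2)[of "ball (Y \<omega>) \<delta>"] d rng by auto
    then show False using \<omega>[of "Suc j"] unfolding miss_def by auto
  qed
  moreover have "(\<lambda>K. measure M (miss K)) \<longlonglongrightarrow> measure M (\<Inter>K. miss K)"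
    using miss_sets by (intro finite_Lim_measure_decseq) (auto simp: decseq_def miss_def)
  ultimately have "(\<lambda>K. measure M (miss K)) \<longlonglongrightarrow> 0" by simp
  then have "\<forall>\<^sub>F K in sequentially. measure M (miss K) < \<epsilon>" using e by (rule order_tendstoD)
  then obtain K where K: "measure M (miss K) < \<epsilon>" by (auto simp: eventually_sequentially)
  define Y' where "Y' = (\<lambda>\<omega>. snap_to dd \<delta> K (Y \<omega>))"
  have "{\<omega> \<in> space M. \<not> dist (Y \<omega>) (Y' \<omega>) < \<delta>} \<subseteq> miss K"
    unfolding miss_def Y'_def using snap_to_near_if by blast
  then have "measure M {\<omega> \<in> space M. \<not> dist (Y \<omega>) (Y' \<omega>) < \<delta>} \<le> measure M (miss K)"
    by (intro finite_measure_mono miss_sets)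
  then have "measure M {\<omega> \<in> space M. \<not> dist (Y \<omega>) (Y' \<omega>) < \<delta>} \<le> \<epsilon>" using K by simp
  moreover have "Y' \<in> borel_measurable N"
    unfolding Y'_def using measurable_compose[OF Y borel_measurable_snap_to] .
  moreover have "range Y' \<subseteq> insert 0 (dd ` {..<K})" using range_snap_to unfolding Y'_def by blast
  then have "finite (range Y')" by (rule finite_subset) simp
  moreover have "\<forall>\<omega>. dist (Y \<omega>) (Y' \<omega>) < \<delta> \<or> Y' \<omega> = 0" unfolding Y'_def using snap_to_near by blast
  ultimately show ?thesis by blast
qed

lemma sum_indicator_level_sets:
  fixes f :: "'b \<Rightarrow> real"
  assumes "finite (range Y)" "\<omega> \<in> space M"
  shows "(\<Sum>z\<in>range Y. indicator (Y -` {z} \<inter> space M) \<omega> * f z) = f (Y \<omega>)"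
proof -
  have "(\<Sum>z\<in>range Y. indicator (Y -` {z} \<inter> space M) \<omega> * f z) = (\<Sum>z\<in>range Y. if Y \<omega> = z then f z else 0)"
    using assms(2) by (intro sum.cong) (auto simp: indicator_def)
  then show ?thesis using assms(1) by (simp add: sum.delta')
qed

lemma borel_measurable_cosh [measurable]:
  "f \<in> borel_measurable M \<Longrightarrow> (\<lambda>x. cosh (f x :: real)) \<in> borel_measurable M"
  using borel_measurable_continuous_onI[OF continuous_on_cosh[OF continuous_on_id]] measurable_compose
  by blast

lemma borel_measurable_sinh [measurable]:
  "f \<in> borel_measurable M \<Longrightarrow> (\<lambda>x. sinh (f x :: real)) \<in> borel_measurable M"
  using borel_measurable_continuous_onI[OF continuous_on_sinh[OF continuous_on_id]] measurable_compose
  by blast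

lemma (in finite_measure) integrable_cosh_norm:
  fixes Y :: "'a \<Rightarrow> 'b::real_normed_vector"
  assumes [measurable]: "Y \<in> borel_measurable M" and Y: "\<And>\<omega>. \<omega> \<in> space M \<Longrightarrow> norm (Y \<omega>) \<le> R"
    and \<mu>: "0 \<le> \<mu>"
  shows "integrable M (\<lambda>\<omega>. cosh (\<mu> * norm (Y \<omega>)))"
proof (intro integrable_const_bound[where B="cosh (\<mu> * R)"] AE_I2)
  fix \<omega> assume "\<omega> \<in> space M"
  then have "\<mu> * norm (Y \<omega>) \<le> \<mu> * R" using Y \<mu> by (intro mult_left_mono) auto
  moreover have "0 \<le> \<mu> * norm (Y \<omega>)" using \<mu> by simp
  ultimately show "norm (cosh (\<mu> * norm (Y \<omega>))) \<le> cosh (\<mu> * R)"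
    by (simp add: cosh_real_nonneg_le_iff)
qed measurable

lemma (in prob_space) prob_ge_le_exp_cosh:
  fixes V :: "'a \<Rightarrow> real"
  assumes V [measurable]: "V \<in> borel_measurable M" and V_nonneg: "\<And>\<omega>. \<omega> \<in> space M \<Longrightarrow> 0 \<le> V \<omega>"
    and int: "integrable M (\<lambda>\<omega>. cosh (lam * V \<omega>))" and lam: "0 \<le> lam" and t: "0 \<le> t"
  shows "prob {\<omega> \<in> space M. t \<le> V \<omega>} \<le> 2 * exp (- lam * t) * (\<integral>\<omega>. cosh (lam * V \<omega>) \<partial>M)"
proof -
  have "{\<omega> \<in> space M. t \<le> V \<omega>} \<subseteq> {\<omega> \<in> space M. cosh (lam * t) \<le> cosh (lam * V \<omega>)}"
    using lam t V_nonneg by (auto simp: cosh_real_nonneg_le_iff mult_left_mono)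
  then have "prob {\<omega> \<in> space M. t \<le> V \<omega>} \<le> prob {\<omega> \<in> space M. cosh (lam * t) \<le> cosh (lam * V \<omega>)}"
    by (intro finite_measure_mono) measurable
  also have "\<dots> \<le> (\<integral>\<omega>. cosh (lam * V \<omega>) \<partial>M) / cosh (lam * t)"
    by (rule integral_Markov_inequality_measure[OF int sets.top]) auto
  also have "\<dots> \<le> (\<integral>\<omega>. cosh (lam * V \<omega>) \<partial>M) / (exp (lam * t) / 2)"
    by (intro divide_left_mono integral_nonneg_AE) (auto simp: cosh_def add_pos_pos)
  also have "\<dots> = 2 * exp (- lam * t) * (\<integral>\<omega>. cosh (lam * V \<omega>) \<partial>M)"
    by (simp add: exp_minus field_simps)
  finally show ?thesis .
qed

section \<open>C-mixing processes\<close>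

locale C_mixing_process = prob_space M for M :: "'w measure" +
  fixes X :: "nat \<Rightarrow> 'w \<Rightarrow> 'b::{banach, second_countable_topology}"
    and Cset :: "('b \<Rightarrow> real) set"
    and Cnorm :: "('b \<Rightarrow> real) \<Rightarrow> real"
    and c :: real and k :: nat
  assumes meas: "\<And>i. X i \<in> borel_measurable M"
    and bounded: "\<And>i \<omega>. i \<ge> 1 \<Longrightarrow> \<omega> \<in> space M \<Longrightarrow> norm (X i \<omega>) \<le> c"
    and C_bdd: "\<And>f. f \<in> Cset \<Longrightarrow> bounded (f ` cball 0 c)"
    and C_borel: "\<And>f. f \<in> Cset \<Longrightarrow> f \<in> borel_measurable borel"
    and C_zero: "(\<lambda>x. 0) \<in> Cset"
    and C_scale: "\<And>f a. f \<in> Cset \<Longrightarrow> (\<lambda>x. a * f x) \<in> Cset"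
    and Cn_scale: "\<And>f a. f \<in> Cset \<Longrightarrow> Cnorm (\<lambda>x. a * f x) = \<bar>a\<bar> * Cnorm f"
    and Phi_fin: "C_mixing_coeff M X Cset Cnorm k \<noteq> \<infinity>"
begin

abbreviation "F i \<equiv> nat_filtr M X i"

lemma subalgebra_F: "subalgebra M (F i)"
  using subalgebra_nat_filtr[OF meas] .

lemma sigma_finite_subalgebra_F: "sigma_finite_subalgebra M (F i)"
  by (rule finite_measure_subalgebra_is_sigma_finite)
     (simp add: finite_measure_subalgebra_def finite_measure_subalgebra_axioms_def subalgebra_F finite_measure_axioms)

lemma space_F [simp]: "space (F i) = space M"
  using subalgebra_F unfolding subalgebra_def by simp

definition "Phi = real_of_ereal (C_mixing_coeff M X Cset Cnorm k)"

lemma test_fun_bounded: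
  assumes "\<phi> \<in> Cset" "1 \<le> j"
  shows "\<exists>B. \<forall>\<omega>\<in>space M. \<bar>\<phi> (X j \<omega>)\<bar> \<le> B"
proof -
  from C_bdd[OF assms(1)] obtain B where B: "\<And>y. y \<in> \<phi> ` cball 0 c \<Longrightarrow> norm y \<le> B"
    unfolding bounded_iff by blast
  have "\<bar>\<phi> (X j \<omega>)\<bar> \<le> B" if "\<omega> \<in> space M" for \<omega>
    using B[of "\<phi> (X j \<omega>)"] bounded[OF assms(2) that] by auto
  then show ?thesis by blast
qed

lemma test_fun_measurable [measurable]:
  assumes "\<phi> \<in> Cset" shows "(\<lambda>\<omega>. \<phi> (X j \<omega>)) \<in> borel_measurable M"
  using measurable_compose[OF meas C_borel[OF assms]] .

lemma integrable_test_fun: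
  assumes "\<phi> \<in> Cset" "1 \<le> j"
  shows "integrable M (\<lambda>\<omega>. \<phi> (X j \<omega>))"
proof -
  obtain B where "\<forall>\<omega>\<in>space M. \<bar>\<phi> (X j \<omega>)\<bar> \<le> B" using test_fun_bounded[OF assms] by blast
  then show ?thesis
    by (intro integrable_const_bound[where B=B]) (auto simp: test_fun_measurable[OF assms(1)])
qed

definition deviation :: "nat \<Rightarrow> ('b \<Rightarrow> real) \<Rightarrow> 'w \<Rightarrow> real" where
  "deviation i \<phi> \<omega> =
     \<bar>real_cond_exp M (F i) (\<lambda>\<omega>. \<phi> (X (i + k) \<omega>)) \<omega> - (\<integral>\<omega>. \<phi> (X (i + k) \<omega>) \<partial>M)\<bar>"

lemma deviation_le_Phi:
  assumes "\<psi> \<in> Cset" "Cnorm \<psi> \<le> 1" "1 \<le> i"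
  shows "AE \<omega> in M. deviation i \<psi> \<omega> \<le> Phi"
proof -
  let ?C = "C_mixing_coeff M X Cset Cnorm k"
  have "esssup M (\<lambda>\<omega>. ereal (deviation i \<psi> \<omega>)) \<le> ?C"
    unfolding C_mixing_coeff_def deviation_def
    by (rule SUP_upper2[where i="(\<psi>, i)"]) (use assms in auto)
  then have ae: "AE \<omega> in M. ereal (deviation i \<psi> \<omega>) \<le> ?C"
    using esssup_AE[of "\<lambda>\<omega>. ereal (deviation i \<psi> \<omega>)" M] by (auto elim: AE_mp)
  have "?C \<noteq> -\<infinity>"
  proof
    assume "?C = -\<infinity>"
    with ae have "AE \<omega> in M. False" by (auto elim: AE_mp)
    then show False by simp
  qed
  then have "?C = ereal Phi" unfolding Phi_def using Phi_fin by (cases ?C) auto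
  with ae show ?thesis by simp
qed

lemma Cnorm_zero: "Cnorm (\<lambda>x. 0) = 0"
  using Cn_scale[OF C_zero, of 0] by simp

lemma Phi_nonneg: "0 \<le> Phi"
proof -
  have "AE \<omega> in M. deviation 1 (\<lambda>x. 0) \<omega> \<le> Phi"
    using deviation_le_Phi[OF C_zero] by (simp add: Cnorm_zero)
  then have "AE \<omega> in M. 0 \<le> Phi" by eventually_elim (auto simp: deviation_def)
  then show ?thesis by simp
qed

lemma deviation_le_pos:
  assumes "\<phi> \<in> Cset" "Cnorm \<phi> \<le> K" "0 < K" "1 \<le> i"
  shows "AE \<omega> in M. deviation i \<phi> \<omega> \<le> K * Phi"
proof -
  interpret S: sigma_finite_subalgebra M "F i" by (rule sigma_finite_subalgebra_F)
  let ?\<psi> = "\<lambda>x. (1/K) * \<phi> x"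
  have "Cnorm ?\<psi> = (1/K) * Cnorm \<phi>" using Cn_scale[OF assms(1), of "1/K"] assms(3) by simp
  also have "\<dots> \<le> 1" using assms(2,3) by (simp add: field_simps)
  finally have "AE \<omega> in M. deviation i ?\<psi> \<omega> \<le> Phi"
    using deviation_le_Phi[OF C_scale[OF assms(1)] _ assms(4)] by blast
  moreover have "integrable M (\<lambda>\<omega>. \<phi> (X (i + k) \<omega>))" by (rule integrable_test_fun) (use assms in auto)
  then have "AE \<omega> in M. real_cond_exp M (F i) (\<lambda>\<omega>. ?\<psi> (X (i + k) \<omega>)) \<omega>
      = (1/K) * real_cond_exp M (F i) (\<lambda>\<omega>. \<phi> (X (i + k) \<omega>)) \<omega>"
    by (rule S.real_cond_exp_cmult)
  ultimately show ?thesis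
  proof eventually_elim
    case (elim \<omega>)
    then have "(1/K) * deviation i \<phi> \<omega> \<le> Phi"
      using assms(3) by (simp add: deviation_def diff_divide_distrib[symmetric])
    then show ?case using assms(3) by (simp add: field_simps)
  qed
qed

text \<open>Since \<open>Cnorm \<phi>\<close> may vanish, the scaling argument is applied with \<open>K + 1 / Suc n\<close>.\<close>

lemma deviation_le:
  assumes "\<phi> \<in> Cset" "Cnorm \<phi> \<le> K" "0 \<le> K" "1 \<le> i"
  shows "AE \<omega> in M. deviation i \<phi> \<omega> \<le> K * Phi"
proof -
  have "AE \<omega> in M. deviation i \<phi> \<omega> \<le> (K + 1 / Suc n) * Phi" for n
    using assms by (intro deviation_le_pos) (auto intro: add_nonneg_pos order.trans[OF _ le_add_same_cancel1[THEN iffD2]])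
  then have "AE \<omega> in M. \<forall>n. deviation i \<phi> \<omega> \<le> K * Phi + Phi / Suc n"
    by (simp add: AE_all_countable distrib_right)
  then show ?thesis
  proof eventually_elim
    case (elim \<omega>)
    show ?case
    proof (rule field_le_epsilon)
      fix e :: real assume "0 < e"
      obtain n :: nat where "Phi / e < Suc n" using reals_Archimedean2 by (metis less_Suc_eq of_nat_less_iff less_trans)
      then have "Phi / Suc n < e" using \<open>0 < e\<close> by (simp add: field_simps)
      then show "deviation i \<phi> \<omega> \<le> K * Phi + e" using elim[rule_format, of n] by simp
    qed
  qed
qed

lemma covariance_le:
  assumes G: "G \<in> borel_measurable (F i)" "\<And>\<omega>. \<omega> \<in> space M \<Longrightarrow> \<bar>G \<omega>\<bar> \<le> Gb"
    and "\<phi> \<in> Cset" "Cnorm \<phi> \<le> K" "0 \<le> K" "1 \<le> i"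
  shows "\<bar>(\<integral>\<omega>. G \<omega> * \<phi> (X (i + k) \<omega>) \<partial>M) - (\<integral>\<omega>. G \<omega> \<partial>M) * (\<integral>\<omega>. \<phi> (X (i + k) \<omega>) \<partial>M)\<bar>
         \<le> K * Phi * (\<integral>\<omega>. \<bar>G \<omega>\<bar> \<partial>M)"
proof -
  interpret S: sigma_finite_subalgebra M "F i" by (rule sigma_finite_subalgebra_F)
  let ?Z = "\<lambda>\<omega>. \<phi> (X (i + k) \<omega>)"
  let ?ce = "real_cond_exp M (F i) ?Z"
  let ?EZ = "\<integral>\<omega>. ?Z \<omega> \<partial>M"
  have GM [measurable]: "G \<in> borel_measurable M" using measurable_from_subalg[OF subalgebra_F G(1)] .
  obtain B where B: "\<forall>\<omega>\<in>space M. \<bar>?Z \<omega>\<bar> \<le> B" using test_fun_bounded[OF assms(3), of "i + k"] assms by auto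
  have Zm [measurable]: "?Z \<in> borel_measurable M" using test_fun_measurable[OF assms(3)] .
  have intG: "integrable M G" by (intro integrable_const_bound[where B=Gb]) (use G in auto)
  have intGZ: "integrable M (\<lambda>\<omega>. G \<omega> * ?Z \<omega>)"
  proof (intro integrable_const_bound[where B="Gb * B"])
    show "AE x in M. norm (G x * ?Z x) \<le> Gb * B"
    proof (intro AE_I2)
      fix x assume x: "x \<in> space M"
      have "0 \<le> Gb" using G(2)[OF x] by linarith
      then show "norm (G x * ?Z x) \<le> Gb * B"
        using G(2)[OF x] B x by (auto simp: abs_mult intro!: mult_mono)
    qed
  qed simp
  have c1: "integrable M (\<lambda>\<omega>. G \<omega> * ?ce \<omega>)" "(\<integral>\<omega>. G \<omega> * ?ce \<omega> \<partial>M) = (\<integral>\<omega>. G \<omega> * ?Z \<omega> \<partial>M)"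
    using S.real_cond_exp_intg[OF intGZ G(1) Zm] by auto
  have "(\<integral>\<omega>. G \<omega> * ?Z \<omega> \<partial>M) - (\<integral>\<omega>. G \<omega> \<partial>M) * ?EZ = (\<integral>\<omega>. G \<omega> * ?ce \<omega> - G \<omega> * ?EZ \<partial>M)"
    using c1 intG by (simp add: integral_diff)
  also have "\<bar>\<dots>\<bar> \<le> (\<integral>\<omega>. \<bar>G \<omega> * ?ce \<omega> - G \<omega> * ?EZ\<bar> \<partial>M)" by (rule integral_abs_bound)
  also have "\<dots> \<le> (\<integral>\<omega>. \<bar>G \<omega>\<bar> * (K * Phi) \<partial>M)"
  proof (rule integral_mono_AE)
    show "integrable M (\<lambda>\<omega>. \<bar>G \<omega> * ?ce \<omega> - G \<omega> * ?EZ\<bar>)" using c1 intG by auto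
    show "integrable M (\<lambda>\<omega>. \<bar>G \<omega>\<bar> * (K * Phi))" using intG by auto
    show "AE \<omega> in M. \<bar>G \<omega> * ?ce \<omega> - G \<omega> * ?EZ\<bar> \<le> \<bar>G \<omega>\<bar> * (K * Phi)"
      using deviation_le[OF assms(3-6)]
    proof (eventually_elim)
      case (elim \<omega>)
      have "\<bar>G \<omega> * ?ce \<omega> - G \<omega> * ?EZ\<bar> = \<bar>G \<omega>\<bar> * \<bar>?ce \<omega> - ?EZ\<bar>" by (simp add: abs_mult[symmetric] right_diff_distrib)
      also have "\<dots> \<le> \<bar>G \<omega>\<bar> * (K * Phi)" using elim unfolding deviation_def by (intro mult_left_mono) auto
      finally show ?case .
    qed
  qed
  also have "\<dots> = K * Phi * (\<integral>\<omega>. \<bar>G \<omega>\<bar> \<partial>M)" by (simp add: mult.commute)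
  finally show ?thesis .
qed

end

locale banach_C_mixing_process = C_mixing_process +
  fixes sigma2 A1 A2 C1 C2 :: real
  assumes c_pos: "c > 0"
    and centered: "\<And>i. i \<ge> 1 \<Longrightarrow> (\<integral>\<omega>. X i \<omega> \<partial>M) = 0"
    and A1_ge: "A1 \<ge> 1" and A2_pos: "A2 > 0"
    and A1_diff: "\<And>(x::'b) v. x \<noteq> 0 \<Longrightarrow> twice_gateaux_diff norm x v"
    and A1_d1: "\<And>(x::'b) v. x \<noteq> 0 \<Longrightarrow> \<bar>gateaux1 norm x v\<bar> \<le> A1 * norm v"
    and A1_d2: "\<And>(x::'b) v. x \<noteq> 0 \<Longrightarrow> \<bar>gateaux2 norm x v\<bar> \<le> A2 * (norm v)\<^sup>2 / norm x"
    and sigma2_pos: "sigma2 > 0"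
    and A2_var: "\<And>i. i \<ge> 1 \<Longrightarrow> (\<integral>\<omega>. (norm (X i \<omega>))\<^sup>2 \<partial>M) \<le> sigma2"
    and C1_nonneg: "C1 \<ge> 0" and C2_nonneg: "C2 \<ge> 0"
    and A3_lin: "\<And>s. bounded_linear s \<Longrightarrow> (\<lambda>x. if norm x \<le> c then s x else 0) \<in> Cset"
    and A3_lin_bd: "\<And>s. bounded_linear s \<Longrightarrow> onorm s \<le> 1 \<Longrightarrow>
                      Cnorm (\<lambda>x. if norm x \<le> c then s x else 0) \<le> C1"
    and A3_sq: "(\<lambda>x. if norm x \<le> c then (norm x)\<^sup>2 else 0) \<in> Cset"
    and A3_sq_bd: "Cnorm (\<lambda>x. if norm x \<le> c then (norm x)\<^sup>2 else 0) \<le> C2"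
begin

definition "m_tilde = C1 * A1 * Phi"
definition "sigma2_tilde = sigma2 + C2 * Phi"
definition "B_norm = A1\<^sup>2 + A2"

lemma m_tilde_nonneg: "0 \<le> m_tilde"
  unfolding m_tilde_def using C1_nonneg A1_ge Phi_nonneg by simp

lemma sigma2_tilde_pos: "0 < sigma2_tilde"
  unfolding sigma2_tilde_def using C2_nonneg Phi_nonneg sigma2_pos by (simp add: add_pos_nonneg)

lemma B_norm_ge_1: "1 \<le> B_norm"
  unfolding B_norm_def using A1_ge A2_pos by (smt (verit) one_le_power)

lemma cosh_norm_add_le:
  fixes x w :: 'b
  assumes "0 \<le> lam"
  shows "cosh (lam * norm (x + w)) \<le> cosh (lam * norm x) + lam * sinh (lam * norm x) * norm_deriv x w
           + (lam\<^sup>2 * B_norm * (norm w)\<^sup>2 / 2) * cosh (lam * norm x) * exp (lam * norm w)"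
  unfolding B_norm_def
  by (rule cosh_norm_taylor[OF A1_diff A1_d1 A1_d2 A1_ge less_imp_le[OF A2_pos] assms])

lemma norm_deriv_bounded_linear: "bounded_linear (norm_deriv (y::'b))" "onorm (norm_deriv y) \<le> A1"
proof -
  have "bounded_linear (norm_deriv y) \<and> onorm (norm_deriv y) \<le> A1"
  proof (cases "y = 0")
    case True
    then have "norm_deriv y = (\<lambda>v. 0)" by (simp add: fun_eq_iff norm_deriv_def)
    then show ?thesis using A1_ge by (simp add: onorm_zero)
  next
    case False
    then have "norm_deriv y = gateaux1 norm y" by (simp add: fun_eq_iff norm_deriv_def)
    then show ?thesis
      using gateaux1_norm_bounded_linear[of y A1] A1_diff[OF False] A1_d1[OF False] A1_ge by auto
  qed
  then show "bounded_linear (norm_deriv y)" "onorm (norm_deriv y) \<le> A1" by auto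
qed

lemma norm_deriv_le: "\<bar>norm_deriv (y::'b) v\<bar> \<le> A1 * norm v"
  unfolding norm_deriv_def using A1_d1 A1_ge by auto

lemma borel_measurable_norm_deriv [measurable]:
  "f \<in> borel_measurable N \<Longrightarrow> (\<lambda>\<omega>. norm_deriv (z::'b) (f \<omega>)) \<in> borel_measurable N"
  using borel_measurable_continuous_onI[OF linear_continuous_on[OF norm_deriv_bounded_linear(1)]]
    measurable_compose by blast

lemma integral_weighted_linear_le:
  assumes G: "G \<in> borel_measurable (F i)" "\<And>\<omega>. \<omega> \<in> space M \<Longrightarrow> \<bar>G \<omega>\<bar> \<le> Gb"
     "\<And>\<omega>. \<omega> \<in> space M \<Longrightarrow> 0 \<le> G \<omega>"
    and i: "1 \<le> i" and s: "bounded_linear s" "onorm s \<le> A1"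
  shows "(\<integral>\<omega>. G \<omega> * s (X (i + k) \<omega>) \<partial>M) \<le> m_tilde * (\<integral>\<omega>. G \<omega> \<partial>M)"
proof -
  let ?s' = "\<lambda>x. (1 / A1) * s x"
  have A1p: "0 < A1" using A1_ge by simp
  have bl: "bounded_linear ?s'" by (rule bounded_linear_compose[OF bounded_linear_mult_right s(1)])
  have "onorm ?s' = \<bar>1/A1\<bar> * onorm s" using onorm_scaleR[OF s(1), of "1/A1"] by simp
  also have "\<dots> \<le> 1" using s(2) A1p by (simp add: field_simps)
  finally have on: "onorm ?s' \<le> 1" .
  define \<phi> where "\<phi> = (\<lambda>x. if norm x \<le> c then ?s' x else 0)"
  have \<phi>C: "\<phi> \<in> Cset" unfolding \<phi>_def by (rule A3_lin[OF bl])
  have \<phi>n: "Cnorm \<phi> \<le> C1" unfolding \<phi>_def by (rule A3_lin_bd[OF bl on])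
  have eq: "\<phi> (X (i + k) \<omega>) = ?s' (X (i + k) \<omega>)" if "\<omega> \<in> space M" for \<omega>
    unfolding \<phi>_def using bounded[of "i + k" \<omega>] that i by auto
  have intX: "integrable M (X (i + k))"
    by (rule integrable_const_bound[where B=c]) (use bounded[of "i+k"] i meas in auto)
  have "(\<integral>\<omega>. \<phi> (X (i + k) \<omega>) \<partial>M) = (\<integral>\<omega>. ?s' (X (i + k) \<omega>) \<partial>M)"
    using eq by (intro Bochner_Integration.integral_cong) auto
  also have "\<dots> = ?s' (\<integral>\<omega>. X (i + k) \<omega> \<partial>M)" by (rule integral_bounded_linear[OF bl intX])
  also have "\<dots> = 0" using centered[of "i + k"] i linear_0[OF bounded_linear.linear[OF bl]] by simp
  finally have E0: "(\<integral>\<omega>. \<phi> (X (i + k) \<omega>) \<partial>M) = 0" .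
  have "\<bar>(\<integral>\<omega>. G \<omega> * \<phi> (X (i + k) \<omega>) \<partial>M) - (\<integral>\<omega>. G \<omega> \<partial>M) * (\<integral>\<omega>. \<phi> (X (i + k) \<omega>) \<partial>M)\<bar>
         \<le> C1 * Phi * (\<integral>\<omega>. \<bar>G \<omega>\<bar> \<partial>M)"
    by (rule covariance_le[OF G(1,2) \<phi>C \<phi>n C1_nonneg i])
  moreover have "(\<integral>\<omega>. \<bar>G \<omega>\<bar> \<partial>M) = (\<integral>\<omega>. G \<omega> \<partial>M)" using G(3) by (intro Bochner_Integration.integral_cong) auto
  moreover have "(\<integral>\<omega>. G \<omega> * \<phi> (X (i + k) \<omega>) \<partial>M) = (1 / A1) * (\<integral>\<omega>. G \<omega> * s (X (i + k) \<omega>) \<partial>M)"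
  proof -
    have "(\<integral>\<omega>. G \<omega> * \<phi> (X (i + k) \<omega>) \<partial>M) = (\<integral>\<omega>. (1 / A1) * (G \<omega> * s (X (i + k) \<omega>)) \<partial>M)"
      using eq by (intro Bochner_Integration.integral_cong) auto
    then show ?thesis by simp
  qed
  ultimately have "\<bar>(1 / A1) * (\<integral>\<omega>. G \<omega> * s (X (i + k) \<omega>) \<partial>M)\<bar> \<le> C1 * Phi * (\<integral>\<omega>. G \<omega> \<partial>M)"
    using E0 by simp
  then have "(1 / A1) * (\<integral>\<omega>. G \<omega> * s (X (i + k) \<omega>) \<partial>M) \<le> C1 * Phi * (\<integral>\<omega>. G \<omega> \<partial>M)"
    by (rule order.trans[OF abs_ge_self])
  then have "(\<integral>\<omega>. G \<omega> * s (X (i + k) \<omega>) \<partial>M) \<le> A1 * (C1 * Phi * (\<integral>\<omega>. G \<omega> \<partial>M))"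
    using A1p by (simp add: field_simps)
  then show ?thesis unfolding m_tilde_def by (simp add: mult_ac)
qed

lemma integral_weighted_norm_sq_le:
  assumes G: "G \<in> borel_measurable (F i)" "\<And>\<omega>. \<omega> \<in> space M \<Longrightarrow> \<bar>G \<omega>\<bar> \<le> Gb"
     "\<And>\<omega>. \<omega> \<in> space M \<Longrightarrow> 0 \<le> G \<omega>"
    and i: "1 \<le> i"
  shows "(\<integral>\<omega>. G \<omega> * (norm (X (i + k) \<omega>))\<^sup>2 \<partial>M) \<le> sigma2_tilde * (\<integral>\<omega>. G \<omega> \<partial>M)"
proof -
  define \<phi> where "\<phi> = (\<lambda>x::'b. if norm x \<le> c then (norm x)\<^sup>2 else 0)"
  have \<phi>C: "\<phi> \<in> Cset" unfolding \<phi>_def by (rule A3_sq)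
  have \<phi>n: "Cnorm \<phi> \<le> C2" unfolding \<phi>_def by (rule A3_sq_bd)
  have eq: "\<phi> (X (i + k) \<omega>) = (norm (X (i + k) \<omega>))\<^sup>2" if "\<omega> \<in> space M" for \<omega>
    unfolding \<phi>_def using bounded[of "i + k" \<omega>] that i by auto
  have E: "(\<integral>\<omega>. \<phi> (X (i + k) \<omega>) \<partial>M) \<le> sigma2"
  proof -
    have "(\<integral>\<omega>. \<phi> (X (i + k) \<omega>) \<partial>M) = (\<integral>\<omega>. (norm (X (i + k) \<omega>))\<^sup>2 \<partial>M)"
      using eq by (rule Bochner_Integration.integral_cong[OF refl])
    then show ?thesis using A2_var[of "i + k"] i by simp
  qed
  have m: "\<bar>(\<integral>\<omega>. G \<omega> * \<phi> (X (i + k) \<omega>) \<partial>M) - (\<integral>\<omega>. G \<omega> \<partial>M) * (\<integral>\<omega>. \<phi> (X (i + k) \<omega>) \<partial>M)\<bar>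
         \<le> C2 * Phi * (\<integral>\<omega>. \<bar>G \<omega>\<bar> \<partial>M)"
    by (rule covariance_le[OF G(1,2) \<phi>C \<phi>n C2_nonneg i])
  have absG: "(\<integral>\<omega>. \<bar>G \<omega>\<bar> \<partial>M) = (\<integral>\<omega>. G \<omega> \<partial>M)" using G(3) by (intro Bochner_Integration.integral_cong) auto
  have EG: "0 \<le> (\<integral>\<omega>. G \<omega> \<partial>M)" using G(3) by (intro integral_nonneg_AE) (auto intro: AE_I2)
  have "(\<integral>\<omega>. G \<omega> * \<phi> (X (i + k) \<omega>) \<partial>M) = (\<integral>\<omega>. G \<omega> * (norm (X (i + k) \<omega>))\<^sup>2 \<partial>M)"
    using eq by (intro Bochner_Integration.integral_cong) auto
  moreover have "(\<integral>\<omega>. G \<omega> \<partial>M) * (\<integral>\<omega>. \<phi> (X (i + k) \<omega>) \<partial>M) \<le> (\<integral>\<omega>. G \<omega> \<partial>M) * sigma2"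
    using E EG by (intro mult_left_mono)
  ultimately show ?thesis using m absG unfolding sigma2_tilde_def by (simp add: algebra_simps)
qed

lemma integral_weighted_norm_deriv_le:
  assumes Y: "Y \<in> borel_measurable (F i)" "finite (range Y)" and i: "1 \<le> i"
    and g: "\<And>y. 0 \<le> g y"
  shows "integrable M (\<lambda>\<omega>. g (Y \<omega>) * norm_deriv (Y \<omega>) (X (i + k) \<omega>))"
    "(\<integral>\<omega>. g (Y \<omega>) * norm_deriv (Y \<omega>) (X (i + k) \<omega>) \<partial>M) \<le> m_tilde * (\<integral>\<omega>. g (Y \<omega>) \<partial>M)"
proof -
  let ?X = "X (i + k)"
  define G where "G z \<omega> = indicator (Y -` {z} \<inter> space M) \<omega> * g z" for z \<omega>
  have "Y -` {z} \<inter> space (F i) \<in> sets (F i)" for z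
    by (rule measurable_sets[OF Y(1)]) simp
  then have G_F: "G z \<in> borel_measurable (F i)" for z unfolding G_def by simp
  have [measurable]: "G z \<in> borel_measurable M" "?X \<in> borel_measurable M" for z
    using measurable_from_subalg[OF subalgebra_F G_F] meas by auto
  have G: "\<bar>G z \<omega>\<bar> \<le> g z" "0 \<le> G z \<omega>" for z \<omega>
    unfolding G_def using g[of z] by (auto simp: indicator_def)
  have "\<bar>norm_deriv z (?X \<omega>)\<bar> \<le> A1 * c" if "\<omega> \<in> space M" for z \<omega>
  proof -
    have "A1 * norm (?X \<omega>) \<le> A1 * c" using bounded[of "i + k" \<omega>] that i A1_ge by (intro mult_left_mono) auto
    then show ?thesis using norm_deriv_le[of z "?X \<omega>"] by linarith
  qed
  then have int: "integrable M (\<lambda>\<omega>. G z \<omega> * norm_deriv z (?X \<omega>))" for z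
    using G g by (intro integrable_const_bound[where B="g z * (A1 * c)"] AE_I2)
      (auto simp: abs_mult intro!: mult_mono)
  have int_G: "integrable M (G z)" for z
    using G by (intro integrable_const_bound[where B="g z"] AE_I2) auto
  have decomp: "g (Y \<omega>) * norm_deriv (Y \<omega>) (?X \<omega>) = (\<Sum>z\<in>range Y. G z \<omega> * norm_deriv z (?X \<omega>))"
    "g (Y \<omega>) = (\<Sum>z\<in>range Y. G z \<omega>)" if "\<omega> \<in> space M" for \<omega>
    using sum_indicator_level_sets[OF Y(2) that, of "\<lambda>z. g z * norm_deriv z (?X \<omega>)"]
      sum_indicator_level_sets[OF Y(2) that, of g]
    by (simp_all add: G_def mult.assoc)
  have "integrable M (\<lambda>\<omega>. g (Y \<omega>) * norm_deriv (Y \<omega>) (?X \<omega>))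
      \<longleftrightarrow> integrable M (\<lambda>\<omega>. \<Sum>z\<in>range Y. G z \<omega> * norm_deriv z (?X \<omega>))"
    by (rule Bochner_Integration.integrable_cong[OF refl decomp(1)])
  then show "integrable M (\<lambda>\<omega>. g (Y \<omega>) * norm_deriv (Y \<omega>) (?X \<omega>))" using int by auto
  have "(\<integral>\<omega>. g (Y \<omega>) * norm_deriv (Y \<omega>) (?X \<omega>) \<partial>M)
      = (\<integral>\<omega>. (\<Sum>z\<in>range Y. G z \<omega> * norm_deriv z (?X \<omega>)) \<partial>M)"
    using decomp(1) by (intro Bochner_Integration.integral_cong) auto
  also have "\<dots> = (\<Sum>z\<in>range Y. (\<integral>\<omega>. G z \<omega> * norm_deriv z (?X \<omega>) \<partial>M))"
    using int by (rule Bochner_Integration.integral_sum)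
  also have "\<dots> \<le> (\<Sum>z\<in>range Y. m_tilde * (\<integral>\<omega>. G z \<omega> \<partial>M))"
    using integral_weighted_linear_le[OF G_F G i norm_deriv_bounded_linear] by (intro sum_mono)
  also have "\<dots> = m_tilde * (\<integral>\<omega>. (\<Sum>z\<in>range Y. G z \<omega>) \<partial>M)"
    using int_G by (simp add: Bochner_Integration.integral_sum sum_distrib_left)
  also have "(\<integral>\<omega>. (\<Sum>z\<in>range Y. G z \<omega>) \<partial>M) = (\<integral>\<omega>. g (Y \<omega>) \<partial>M)"
    using decomp(2) by (intro Bochner_Integration.integral_cong) auto
  finally show "(\<integral>\<omega>. g (Y \<omega>) * norm_deriv (Y \<omega>) (?X \<omega>) \<partial>M) \<le> m_tilde * (\<integral>\<omega>. g (Y \<omega>) \<partial>M)" .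
qed

end

section \<open>The conditioning step\<close>

lemma norm_le_of_near:
  fixes y y' :: "'a::real_normed_vector"
  assumes "dist y y' < \<delta> \<or> y' = 0" "0 \<le> \<delta>"
  shows "norm y' \<le> norm y + \<delta>"
proof (cases "y' = 0")
  case False
  with assms have "norm (y - y') < \<delta>" by (simp add: dist_norm)
  then show ?thesis using norm_triangle_sub[of y' y] by (simp add: norm_minus_commute)
qed (use assms in simp)

lemma cosh_norm_le_of_near:
  fixes y y' :: "'a::real_normed_vector"
  assumes "dist y y' < \<delta> \<or> y' = 0" "0 \<le> \<delta>" "0 \<le> \<mu>"
  shows "cosh (\<mu> * norm y') \<le> exp (\<mu> * \<delta>) * cosh (\<mu> * norm y)"
proof -
  have "cosh (\<mu> * norm y') \<le> cosh (\<mu> * norm y + \<mu> * \<delta>)"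
    using norm_le_of_near[OF assms(1,2)] assms(2,3)
    by (subst cosh_real_nonneg_le_iff) (auto simp: distrib_left[symmetric] mult_left_mono)
  also have "\<dots> \<le> cosh (\<mu> * norm y) * exp (\<mu> * \<delta>)"
    using assms by (intro cosh_add_le_mult_exp) simp
  finally show ?thesis by (simp add: mult.commute)
qed

context banach_C_mixing_process
begin

lemma cosh_norm_add_le_near:
  fixes y y' x :: 'b
  assumes near: "dist y y' < \<delta>" and y: "norm y \<le> R" and x: "norm x \<le> c"
    and \<mu>: "0 \<le> \<mu>" and \<delta>: "0 < \<delta>" "\<delta> < 1"
  shows "cosh (\<mu> * norm (y + x)) \<le> cosh (\<mu> * norm y') + \<mu> * (sinh (\<mu> * norm y') * norm_deriv y' x)
     + \<mu> * sinh (\<mu> * (R + 1)) * A1 * \<delta>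
     + \<mu>\<^sup>2 * B_norm / 2 * exp (\<mu> * (c + \<delta>))
         * (cosh (\<mu> * norm y') * (norm x)\<^sup>2 + (2 * c + 1) * \<delta> * cosh (\<mu> * norm y'))"
proof -
  define w where "w = x + (y - y')"
  have yy': "norm (y - y') < \<delta>" using near by (simp add: dist_norm)
  have "norm y' \<le> R + 1" using norm_le_of_near[of y y' \<delta>] near y \<delta> by simp
  then have "sinh (\<mu> * norm y') \<le> sinh (\<mu> * (R + 1))" using \<mu> by (simp add: mult_left_mono)
  moreover have "norm_deriv y' (y - y') \<le> A1 * \<delta>"
    using norm_deriv_le[of y' "y - y'"] yy' A1_ge by (smt (verit) mult_left_mono)
  moreover have "0 \<le> sinh (\<mu> * norm y')" using \<mu> by simp
  ultimately have "sinh (\<mu> * norm y') * norm_deriv y' (y - y') \<le> sinh (\<mu> * (R + 1)) * (A1 * \<delta>)"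
    using \<delta> A1_ge by (smt (verit) mult_left_mono mult_right_mono mult_nonneg_nonneg)
  then have lin: "\<mu> * sinh (\<mu> * norm y') * norm_deriv y' (y - y') \<le> \<mu> * sinh (\<mu> * (R + 1)) * A1 * \<delta>"
    using \<mu> by (simp add: mult.assoc mult_left_mono)
  have w: "norm w \<le> norm x + \<delta>"
    unfolding w_def using norm_triangle_ineq[of x "y - y'"] yy' by linarith
  have "(norm w)\<^sup>2 \<le> (norm x + \<delta>)\<^sup>2" using w by (intro power_mono) auto
  also have "\<dots> \<le> (norm x)\<^sup>2 + (2 * c + 1) * \<delta>"
  proof -
    have "\<delta> * \<delta> \<le> \<delta>" and "\<delta> * norm x \<le> \<delta> * c" using x \<delta> by (auto intro: mult_left_mono)
    then show ?thesis by (simp add: power2_eq_square algebra_simps)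
  qed
  finally have w2: "(norm w)\<^sup>2 \<le> (norm x)\<^sup>2 + (2 * c + 1) * \<delta>" .
  have "exp (\<mu> * norm w) \<le> exp (\<mu> * (c + \<delta>))" using w x \<mu> by (simp add: mult_left_mono)
  have quad: "\<mu>\<^sup>2 * B_norm * (norm w)\<^sup>2 / 2 * cosh (\<mu> * norm y') * exp (\<mu> * norm w)
      \<le> \<mu>\<^sup>2 * B_norm / 2 * exp (\<mu> * (c + \<delta>))
         * (cosh (\<mu> * norm y') * (norm x)\<^sup>2 + (2 * c + 1) * \<delta> * cosh (\<mu> * norm y'))"
  proof -
    have "\<mu>\<^sup>2 * B_norm * (norm w)\<^sup>2 / 2 * cosh (\<mu> * norm y') * exp (\<mu> * norm w)
      \<le> \<mu>\<^sup>2 * B_norm / 2 * exp (\<mu> * (c + \<delta>)) * cosh (\<mu> * norm y') * ((norm x)\<^sup>2 + (2 * c + 1) * \<delta>)"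
      using w2 \<open>exp (\<mu> * norm w) \<le> _\<close> B_norm_ge_1 by (simp add: mult_ac mult_mono mult_left_mono)
    then show ?thesis by (simp add: algebra_simps)
  qed
  have "norm_deriv y' w = norm_deriv y' x + norm_deriv y' (y - y')"
    unfolding w_def using linear_add[OF bounded_linear.linear[OF norm_deriv_bounded_linear(1)]] by blast
  moreover have "y' + w = y + x" unfolding w_def by (simp add: algebra_simps)
  ultimately show ?thesis
    using cosh_norm_add_le[OF \<mu>, of y' w] lin quad by (simp add: distrib_left mult.assoc)
qed

lemma cosh_norm_add_le_approx:
  fixes y y' x :: 'b
  assumes y: "norm y \<le> R" and x: "norm x \<le> c" and \<mu>: "0 \<le> \<mu>" and \<delta>: "0 < \<delta>" "\<delta> < 1"
    and near: "dist y y' < \<delta> \<or> y' = 0"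
  shows "cosh (\<mu> * norm (y + x)) \<le> cosh (\<mu> * norm y') + \<mu> * (sinh (\<mu> * norm y') * norm_deriv y' x)
     + \<mu> * sinh (\<mu> * (R + 1)) * A1 * \<delta>
     + \<mu>\<^sup>2 * B_norm / 2 * exp (\<mu> * (c + \<delta>))
         * (cosh (\<mu> * norm y') * (norm x)\<^sup>2 + (2 * c + 1) * \<delta> * cosh (\<mu> * norm y'))
     + cosh (\<mu> * (R + c)) * (if dist y y' < \<delta> then 0 else 1)"
proof (cases "dist y y' < \<delta>")
  case True
  then show ?thesis using cosh_norm_add_le_near[OF True y x \<mu> \<delta>] by simp
next
  case False
  then have "y' = 0" using near by blast
  have "0 \<le> R" using y norm_ge_zero order.trans by blast
  moreover have "norm (y + x) \<le> R + c" using y x norm_triangle_ineq[of y x] by linarith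
  ultimately have "cosh (\<mu> * norm (y + x)) \<le> cosh (\<mu> * (R + c))"
    using \<mu> c_pos by (subst cosh_real_nonneg_le_iff) (auto intro: mult_left_mono)
  moreover have "0 \<le> \<mu> * sinh (\<mu> * (R + 1)) * A1 * \<delta>" using \<mu> \<open>0 \<le> R\<close> A1_ge \<delta> by simp
  moreover have "0 \<le> \<mu>\<^sup>2 * B_norm / 2 * exp (\<mu> * (c + \<delta>)) * ((norm x)\<^sup>2 + (2 * c + 1) * \<delta>)"
    using B_norm_ge_1 c_pos \<delta> by simp
  ultimately show ?thesis using False \<open>y' = 0\<close> by (simp add: norm_deriv_def)
qed

end

context banach_C_mixing_process
begin

lemma integral_sinh_norm_deriv_le:
  assumes Y: "Y \<in> borel_measurable (F i)" "finite (range Y)" "\<And>\<omega>. \<omega> \<in> space M \<Longrightarrow> norm (Y \<omega>) \<le> R"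
    and i: "1 \<le> i" and \<mu>: "0 \<le> \<mu>"
  shows "integrable M (\<lambda>\<omega>. sinh (\<mu> * norm (Y \<omega>)) * norm_deriv (Y \<omega>) (X (i + k) \<omega>))"
    "(\<integral>\<omega>. sinh (\<mu> * norm (Y \<omega>)) * norm_deriv (Y \<omega>) (X (i + k) \<omega>) \<partial>M)
      \<le> m_tilde * (\<integral>\<omega>. cosh (\<mu> * norm (Y \<omega>)) \<partial>M)"
proof -
  note weighted = integral_weighted_norm_deriv_le[OF Y(1,2) i, of "\<lambda>y. sinh (\<mu> * norm y)"]
  show "integrable M (\<lambda>\<omega>. sinh (\<mu> * norm (Y \<omega>)) * norm_deriv (Y \<omega>) (X (i + k) \<omega>))"
    using weighted \<mu> by simp
  have [measurable]: "Y \<in> borel_measurable M" using measurable_from_subalg[OF subalgebra_F Y(1)] .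
  have int_cosh: "integrable M (\<lambda>\<omega>. cosh (\<mu> * norm (Y \<omega>)))"
    using integrable_cosh_norm[OF _ Y(3) \<mu>] by simp
  have "(\<integral>\<omega>. sinh (\<mu> * norm (Y \<omega>)) \<partial>M) \<le> (\<integral>\<omega>. cosh (\<mu> * norm (Y \<omega>)) \<partial>M)"
  proof (rule integral_mono[OF _ int_cosh sinh_le_cosh_real])
    have "\<bar>sinh (\<mu> * norm (Y \<omega>))\<bar> \<le> cosh (\<mu> * norm (Y \<omega>))" for \<omega>
      using \<mu> sinh_le_cosh_real by simp
    then show "integrable M (\<lambda>\<omega>. sinh (\<mu> * norm (Y \<omega>)))"
      by (intro Bochner_Integration.integrable_bound[OF int_cosh]) (auto intro: AE_I2)
  qed
  then show "(\<integral>\<omega>. sinh (\<mu> * norm (Y \<omega>)) * norm_deriv (Y \<omega>) (X (i + k) \<omega>) \<partial>M)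
      \<le> m_tilde * (\<integral>\<omega>. cosh (\<mu> * norm (Y \<omega>)) \<partial>M)"
    using weighted(2) \<mu> mult_left_mono[OF _ m_tilde_nonneg] by (auto intro: order.trans)
qed

lemma integral_cosh_norm_sq_le:
  assumes Y: "Y \<in> borel_measurable (F i)" "\<And>\<omega>. \<omega> \<in> space M \<Longrightarrow> norm (Y \<omega>) \<le> R"
    and i: "1 \<le> i" and \<mu>: "0 \<le> \<mu>"
  shows "integrable M (\<lambda>\<omega>. cosh (\<mu> * norm (Y \<omega>)) * (norm (X (i + k) \<omega>))\<^sup>2)"
    "(\<integral>\<omega>. cosh (\<mu> * norm (Y \<omega>)) * (norm (X (i + k) \<omega>))\<^sup>2 \<partial>M)
      \<le> sigma2_tilde * (\<integral>\<omega>. cosh (\<mu> * norm (Y \<omega>)) \<partial>M)"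
proof -
  have [measurable]: "Y \<in> borel_measurable M" "X (i + k) \<in> borel_measurable M"
    using measurable_from_subalg[OF subalgebra_F Y(1)] meas by auto
  have "0 \<le> R" using Y(2) norm_ge_zero order.trans not_empty by blast
  have cosh_le: "\<bar>cosh (\<mu> * norm (Y \<omega>))\<bar> \<le> cosh (\<mu> * R)" if "\<omega> \<in> space M" for \<omega>
    using Y(2)[OF that] \<mu> \<open>0 \<le> R\<close> by (simp add: cosh_real_nonneg_le_iff mult_left_mono)
  show "integrable M (\<lambda>\<omega>. cosh (\<mu> * norm (Y \<omega>)) * (norm (X (i + k) \<omega>))\<^sup>2)"
    using cosh_le bounded i
    by (intro integrable_const_bound[where B="cosh (\<mu> * R) * c\<^sup>2"] AE_I2)
       (auto simp: abs_mult intro!: mult_mono power_mono)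
  have "(\<lambda>\<omega>. cosh (\<mu> * norm (Y \<omega>))) \<in> borel_measurable (F i)" using Y(1) by measurable
  from integral_weighted_norm_sq_le[OF this cosh_le _ i]
  show "(\<integral>\<omega>. cosh (\<mu> * norm (Y \<omega>)) * (norm (X (i + k) \<omega>))\<^sup>2 \<partial>M)
      \<le> sigma2_tilde * (\<integral>\<omega>. cosh (\<mu> * norm (Y \<omega>)) \<partial>M)" by simp
qed

text \<open>The first order term involves the functional \<open>norm_deriv (Y \<omega>)\<close>, which depends on \<open>\<omega>\<close>,
  while the mixing bound applies to one fixed test function at a time. Hence \<open>Y\<close> is replaced by
  an \<open>\<M>\<^sub>i\<close>-measurable finitely-valued \<open>Y'\<close> that is \<open>\<delta>\<close>-close to it except on a set of
  probability at most \<open>\<delta>\<close>, and \<open>\<delta> \<rightarrow> 0\<close> at the end.\<close>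

lemma integral_cosh_norm_add_le_approx:
  assumes Y: "Y \<in> borel_measurable (F i)" "\<And>\<omega>. \<omega> \<in> space M \<Longrightarrow> norm (Y \<omega>) \<le> R"
    and Y': "Y' \<in> borel_measurable (F i)" "finite (range Y')" "\<And>\<omega>. dist (Y \<omega>) (Y' \<omega>) < \<delta> \<or> Y' \<omega> = 0"
    and i: "1 \<le> i" and \<mu>: "0 \<le> \<mu>" and \<delta>: "0 < \<delta>" "\<delta> < 1"
  defines "bad \<equiv> {\<omega> \<in> space M. \<not> dist (Y \<omega>) (Y' \<omega>) < \<delta>}"
  shows "(\<integral>\<omega>. cosh (\<mu> * norm (Y \<omega> + X (i + k) \<omega>)) \<partial>M)
     \<le> (\<integral>\<omega>. cosh (\<mu> * norm (Y' \<omega>)) \<partial>M)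
          * (1 + \<mu> * m_tilde + \<mu>\<^sup>2 * B_norm / 2 * exp (\<mu> * (c + \<delta>)) * (sigma2_tilde + (2 * c + 1) * \<delta>))
       + \<mu> * sinh (\<mu> * (R + 1)) * A1 * \<delta> + cosh (\<mu> * (R + c)) * prob bad"
proof -
  let ?X = "X (i + k)"
  define Q where "Q = \<mu>\<^sup>2 * B_norm / 2 * exp (\<mu> * (c + \<delta>))"
  define G where "G \<omega> = cosh (\<mu> * norm (Y' \<omega>))" for \<omega>
  define L where "L \<omega> = sinh (\<mu> * norm (Y' \<omega>)) * norm_deriv (Y' \<omega>) (?X \<omega>)" for \<omega>
  define H where "H \<omega> = G \<omega> * (norm (?X \<omega>))\<^sup>2" for \<omega>
  have [measurable]: "Y \<in> borel_measurable M" "Y' \<in> borel_measurable M" "?X \<in> borel_measurable M"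
    using measurable_from_subalg[OF subalgebra_F] Y(1) Y'(1) meas by auto
  have "0 \<le> R" using Y(2) norm_ge_zero order.trans not_empty by blast
  have X: "norm (?X \<omega>) \<le> c" if "\<omega> \<in> space M" for \<omega> using bounded i that by simp
  have Y'_le: "norm (Y' \<omega>) \<le> R + 1" if "\<omega> \<in> space M" for \<omega>
    using norm_le_of_near[OF Y'(3), of \<omega>] Y(2)[OF that] \<delta> by simp
  have int_G: "integrable M G" unfolding G_def using integrable_cosh_norm[OF _ Y'_le \<mu>] by simp
  have L: "integrable M L" and L_le: "(\<integral>\<omega>. L \<omega> \<partial>M) \<le> m_tilde * (\<integral>\<omega>. G \<omega> \<partial>M)"
    unfolding L_def G_def using integral_sinh_norm_deriv_le[OF Y'(1,2) Y'_le i \<mu>] by auto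
  have H: "integrable M H" and H_le: "(\<integral>\<omega>. H \<omega> \<partial>M) \<le> sigma2_tilde * (\<integral>\<omega>. G \<omega> \<partial>M)"
    unfolding H_def G_def using integral_cosh_norm_sq_le[OF Y'(1) Y'_le i \<mu>] by auto
  have bad [measurable]: "bad \<in> sets M" unfolding bad_def by measurable
  have int_bad: "integrable M (indicator bad :: _ \<Rightarrow> real)"
    using bad by (intro integrable_real_indicator) (auto simp: less_top[symmetric])
  define RHS where "RHS \<omega> = G \<omega> + \<mu> * L \<omega> + \<mu> * sinh (\<mu> * (R + 1)) * A1 * \<delta>
    + Q * (H \<omega> + (2 * c + 1) * \<delta> * G \<omega>) + cosh (\<mu> * (R + c)) * indicator bad \<omega>" for \<omega>
  have "(\<integral>\<omega>. cosh (\<mu> * norm (Y \<omega> + ?X \<omega>)) \<partial>M) \<le> (\<integral>\<omega>. RHS \<omega> \<partial>M)"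
  proof (rule integral_mono)
    show "integrable M (\<lambda>\<omega>. cosh (\<mu> * norm (Y \<omega> + ?X \<omega>)))"
      using Y(2) X norm_triangle_ineq \<mu>
      by (intro integrable_cosh_norm[where R="R + c"]) (auto intro: order.trans[OF norm_triangle_ineq add_mono])
    show "integrable M RHS" unfolding RHS_def using int_G L H int_bad by auto
    show "cosh (\<mu> * norm (Y \<omega> + ?X \<omega>)) \<le> RHS \<omega>" if "\<omega> \<in> space M" for \<omega>
    proof -
      have "indicator bad \<omega> = (if dist (Y \<omega>) (Y' \<omega>) < \<delta> then 0 else 1 :: real)"
        using that by (auto simp: bad_def indicator_def)
      then show ?thesis
        using cosh_norm_add_le_approx[OF Y(2)[OF that] X[OF that] \<mu> \<delta> Y'(3)]
        unfolding RHS_def G_def L_def H_def Q_def by simp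
    qed
  qed
  also have "(\<integral>\<omega>. RHS \<omega> \<partial>M) = (\<integral>\<omega>. G \<omega> \<partial>M) + \<mu> * (\<integral>\<omega>. L \<omega> \<partial>M) + \<mu> * sinh (\<mu> * (R + 1)) * A1 * \<delta>
      + Q * ((\<integral>\<omega>. H \<omega> \<partial>M) + (2 * c + 1) * \<delta> * (\<integral>\<omega>. G \<omega> \<partial>M)) + cosh (\<mu> * (R + c)) * prob bad"
    unfolding RHS_def using int_G L H int_bad bad by (simp add: prob_space)
  also have "\<dots> \<le> (\<integral>\<omega>. G \<omega> \<partial>M) * (1 + \<mu> * m_tilde + Q * (sigma2_tilde + (2 * c + 1) * \<delta>))
      + \<mu> * sinh (\<mu> * (R + 1)) * A1 * \<delta> + cosh (\<mu> * (R + c)) * prob bad"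
  proof -
    have "\<mu> * (\<integral>\<omega>. L \<omega> \<partial>M) \<le> \<mu> * (m_tilde * (\<integral>\<omega>. G \<omega> \<partial>M))" using L_le \<mu> by (rule mult_left_mono)
    moreover have "Q * (\<integral>\<omega>. H \<omega> \<partial>M) \<le> Q * (sigma2_tilde * (\<integral>\<omega>. G \<omega> \<partial>M))"
      using H_le B_norm_ge_1 by (intro mult_left_mono) (auto simp: Q_def)
    ultimately show ?thesis by (simp add: algebra_simps)
  qed
  finally show ?thesis unfolding G_def Q_def .
qed

lemma integral_cosh_norm_add_le_delta:
  assumes Y: "Y \<in> borel_measurable (F i)" "\<And>\<omega>. \<omega> \<in> space M \<Longrightarrow> norm (Y \<omega>) \<le> R"
    and i: "1 \<le> i" and \<mu>: "0 \<le> \<mu>" and \<delta>: "0 < \<delta>" "\<delta> < 1"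
  shows "(\<integral>\<omega>. cosh (\<mu> * norm (Y \<omega> + X (i + k) \<omega>)) \<partial>M)
     \<le> exp (\<mu> * \<delta>) * (\<integral>\<omega>. cosh (\<mu> * norm (Y \<omega>)) \<partial>M)
          * (1 + \<mu> * m_tilde + \<mu>\<^sup>2 * B_norm / 2 * exp (\<mu> * (c + \<delta>)) * (sigma2_tilde + (2 * c + 1) * \<delta>))
       + \<mu> * sinh (\<mu> * (R + 1)) * A1 * \<delta> + cosh (\<mu> * (R + c)) * \<delta>"
proof -
  obtain Y' where Y': "Y' \<in> borel_measurable (F i)" "finite (range Y')"
      "\<forall>\<omega>. dist (Y \<omega>) (Y' \<omega>) < \<delta> \<or> Y' \<omega> = 0"
      "prob {\<omega> \<in> space M. \<not> dist (Y \<omega>) (Y' \<omega>) < \<delta>} \<le> \<delta>"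
    using finite_range_approx[OF Y(1) subalgebra_F finite_measure_axioms \<delta>(1) \<delta>(1)] by blast
  have [measurable]: "Y \<in> borel_measurable M" "Y' \<in> borel_measurable M"
    using measurable_from_subalg[OF subalgebra_F] Y(1) Y'(1) by auto
  have "(\<integral>\<omega>. cosh (\<mu> * norm (Y' \<omega>)) \<partial>M) \<le> (\<integral>\<omega>. exp (\<mu> * \<delta>) * cosh (\<mu> * norm (Y \<omega>)) \<partial>M)"
  proof (rule integral_mono)
    have "norm (Y' \<omega>) \<le> R + 1" if "\<omega> \<in> space M" for \<omega>
      using norm_le_of_near[of "Y \<omega>" "Y' \<omega>" \<delta>] Y'(3) Y(2)[OF that] \<delta> by force
    from integrable_cosh_norm[OF _ this \<mu>]
    show "integrable M (\<lambda>\<omega>. cosh (\<mu> * norm (Y' \<omega>)))" by simp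
    show "integrable M (\<lambda>\<omega>. exp (\<mu> * \<delta>) * cosh (\<mu> * norm (Y \<omega>)))"
      using integrable_cosh_norm[OF _ Y(2) \<mu>] by simp
    show "cosh (\<mu> * norm (Y' \<omega>)) \<le> exp (\<mu> * \<delta>) * cosh (\<mu> * norm (Y \<omega>))" for \<omega>
      using cosh_norm_le_of_near[of "Y \<omega>" "Y' \<omega>" \<delta> \<mu>] Y'(3) \<delta> \<mu> by simp
  qed
  then have "(\<integral>\<omega>. cosh (\<mu> * norm (Y' \<omega>)) \<partial>M) \<le> exp (\<mu> * \<delta>) * (\<integral>\<omega>. cosh (\<mu> * norm (Y \<omega>)) \<partial>M)"
    by simp
  moreover have "0 \<le> 1 + \<mu> * m_tilde + \<mu>\<^sup>2 * B_norm / 2 * exp (\<mu> * (c + \<delta>)) * (sigma2_tilde + (2 * c + 1) * \<delta>)"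
    using \<mu> \<delta> m_tilde_nonneg B_norm_ge_1 sigma2_tilde_pos c_pos by simp
  ultimately show ?thesis
    using integral_cosh_norm_add_le_approx[OF Y Y'(1,2) _ i \<mu> \<delta>] Y'(3,4)
      mult_left_mono[OF Y'(4), of "cosh (\<mu> * (R + c))"] mult_right_mono
    by (smt (verit) cosh_real_pos)
qed

definition rho :: "real \<Rightarrow> real" where
  "rho \<mu> = 1 + \<mu> * m_tilde + \<mu>\<^sup>2 * B_norm * sigma2_tilde * exp (\<mu> * c) / 2"

lemma rho_nonneg: "0 \<le> \<mu> \<Longrightarrow> 0 \<le> rho \<mu>"
  unfolding rho_def using m_tilde_nonneg B_norm_ge_1 sigma2_tilde_pos by (intro add_nonneg_nonneg) auto

lemma integral_cosh_norm_add_le: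
  assumes Y: "Y \<in> borel_measurable (F i)" "\<And>\<omega>. \<omega> \<in> space M \<Longrightarrow> norm (Y \<omega>) \<le> R"
    and i: "1 \<le> i" and \<mu>: "0 \<le> \<mu>"
  shows "(\<integral>\<omega>. cosh (\<mu> * norm (Y \<omega> + X (i + k) \<omega>)) \<partial>M) \<le> (\<integral>\<omega>. cosh (\<mu> * norm (Y \<omega>)) \<partial>M) * rho \<mu>"
proof -
  define EY where "EY = (\<integral>\<omega>. cosh (\<mu> * norm (Y \<omega>)) \<partial>M)"
  define f where "f \<delta> = exp (\<mu> * \<delta>) * EY
       * (1 + \<mu> * m_tilde + \<mu>\<^sup>2 * B_norm / 2 * exp (\<mu> * (c + \<delta>)) * (sigma2_tilde + (2 * c + 1) * \<delta>))
       + \<mu> * sinh (\<mu> * (R + 1)) * A1 * \<delta> + cosh (\<mu> * (R + c)) * \<delta>" for \<delta>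
  have "(f \<longlongrightarrow> f 0) (at_right 0)"
    unfolding f_def by (intro tendsto_intros)
  moreover have "\<forall>\<^sub>F \<delta> in at_right 0. (\<integral>\<omega>. cosh (\<mu> * norm (Y \<omega> + X (i + k) \<omega>)) \<partial>M) \<le> f \<delta>"
    unfolding f_def EY_def using integral_cosh_norm_add_le_delta[OF Y i \<mu>]
    by (intro eventually_at_rightI[of 0 1]) auto
  ultimately have "(\<integral>\<omega>. cosh (\<mu> * norm (Y \<omega> + X (i + k) \<omega>)) \<partial>M) \<le> f 0"
    by (intro tendsto_le[OF trivial_limit_at_right_real _ tendsto_const])
  also have "f 0 = EY * rho \<mu>" unfolding f_def rho_def by (simp add: algebra_simps power2_eq_square)
  finally show ?thesis unfolding EY_def .
qed

end

section \<open>Summing along arithmetic progressions\<close>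

text \<open>The number of \<open>i \<in> {1..n}\<close> with \<open>i \<equiv> j (mod k)\<close>, for \<open>1 \<le> j \<le> k \<le> n\<close>.\<close>

definition stride_len :: "nat \<Rightarrow> nat \<Rightarrow> nat \<Rightarrow> nat" where
  "stride_len k n j = (n - j) div k + 1"

lemma bij_betw_stride:
  assumes k: "1 \<le> k" and kn: "k \<le> n"
  shows "bij_betw (\<lambda>(j, q). j + q * k) (SIGMA j:{1..k}. {..<stride_len k n j}) {1..n}"
  unfolding stride_len_def
proof (rule bij_betwI[where g = "\<lambda>i. ((i - 1) mod k + 1, (i - 1) div k)"])
  let ?L = "\<lambda>j. (n - j) div k + 1"
  let ?S = "SIGMA j:{1..k}. {..<?L j}"
  let ?h = "\<lambda>(j, q). j + q * k"
  let ?g = "\<lambda>i. ((i - 1) mod k + 1, (i - 1) div k)"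
  show "?h \<in> ?S \<rightarrow> {1..n}"
  proof
    fix x assume "x \<in> ?S"
    then obtain j q where x: "x = (j, q)" "1 \<le> j" "j \<le> k" "q < ?L j" by auto
    then have "q \<le> (n - j) div k" by simp
    then have "q * k \<le> (n - j) div k * k" by simp
    also have "\<dots> \<le> n - j" by (metis div_mult_mod_eq le_add1)
    finally show "?h x \<in> {1..n}" using x kn by auto
  qed
  show "?g \<in> {1..n} \<rightarrow> ?S"
  proof
    fix i assume i: "i \<in> {1..n}"
    let ?j = "(i - 1) mod k + 1" and ?q = "(i - 1) div k"
    have j1: "1 \<le> ?j" "?j \<le> k" using k by (auto simp: Suc_le_eq)
    have ij: "i = ?j + ?q * k" using i by (simp add: mod_div_mult_eq[symmetric])
    have qe: "?q * k = i - ?j" using ij by (metis add_diff_cancel_left')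
    have "i - ?j \<le> n - ?j" using i by (intro diff_le_mono) auto
    then have "?q * k \<le> n - ?j" using qe by simp
    then have "?q * k div k \<le> (n - ?j) div k" by (rule div_le_mono)
    then have "?q \<le> (n - ?j) div k" using k by simp
    then show "?g i \<in> ?S" using j1 by auto
  qed
  show "?g (?h x) = x" if "x \<in> ?S" for x
  proof -
    obtain j q where x: "x = (j, q)" "1 \<le> j" "j \<le> k" using \<open>x \<in> ?S\<close> by auto
    obtain m where m: "j = Suc m" using x(2) by (cases j) auto
    have mk: "m < k" using m x(3) by simp
    have e: "j + q * k - 1 = m + q * k" using m by simp
    have "(m + q * k) mod k = m" using mk by simp
    moreover have "(m + q * k) div k = q" using mk by simp
    ultimately show ?thesis using x(1) e m by simp
  qed
  show "?h (?g i) = i" if "i \<in> {1..n}" for i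
    using that by (simp add: mod_div_mult_eq)
qed

lemma sum_stride_reindex:
  fixes f :: "nat \<Rightarrow> 'a::comm_monoid_add"
  assumes "1 \<le> k" "k \<le> n"
  shows "(\<Sum>i\<in>{1..n}. f i) = (\<Sum>j\<in>{1..k}. \<Sum>q<stride_len k n j. f (j + q * k))"
proof -
  have "(\<Sum>j\<in>{1..k}. \<Sum>q<stride_len k n j. f (j + q * k))
      = (\<Sum>x\<in>(SIGMA j:{1..k}. {..<stride_len k n j}). f ((\<lambda>(j, q). j + q * k) x))"
    by (subst sum.Sigma) (auto simp: case_prod_beta)
  also have "\<dots> = (\<Sum>i\<in>{1..n}. f i)" using sum.reindex_bij_betw[OF bij_betw_stride[OF assms]] .
  finally show ?thesis ..
qed

lemma stride_lengths:
  fixes n l k r :: nat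
  assumes n: "n = l * k + r" and l: "1 \<le> l" and k: "1 \<le> k"
  shows "(\<Sum>j\<in>{1..k}. stride_len k n j) = n" and "\<And>j. j \<in> {1..k} \<Longrightarrow> l \<le> stride_len k n j"
proof -
  have "k \<le> n" using n l by (metis add_increasing2 le_add1 mult_le_mono1 mult_1 zero_le)
  then show "(\<Sum>j\<in>{1..k}. stride_len k n j) = n"
    using sum_stride_reindex[of k n "\<lambda>i. 1::nat"] k by simp
  fix j assume "j \<in> {1..k}"
  then have "l * k - k \<le> l * k + r - j" by (meson diff_le_mono diff_le_mono2 le_add1 order_trans atLeastAtMost_iff)
  then have "(l - 1) * k \<le> n - j" using n by (simp add: diff_mult_distrib)
  then have "(l - 1) * k div k \<le> (n - j) div k" by (rule div_le_mono)
  then show "l \<le> stride_len k n j" using k by (simp add: stride_len_def)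
qed

context banach_C_mixing_process
begin

definition stride_sum :: "nat \<Rightarrow> nat \<Rightarrow> 'a \<Rightarrow> 'b" where
  "stride_sum j p \<omega> = (\<Sum>q<p. X (j + q * k) \<omega>)"

lemma borel_measurable_stride_sum:
  "1 \<le> j \<Longrightarrow> stride_sum j (Suc p) \<in> borel_measurable (F (j + p * k))"
  unfolding stride_sum_def by (intro borel_measurable_sum measurable_nat_filtr) auto

lemma norm_stride_sum_le: "1 \<le> j \<Longrightarrow> \<omega> \<in> space M \<Longrightarrow> norm (stride_sum j p \<omega>) \<le> real p * c"
  unfolding stride_sum_def using norm_sum[of "\<lambda>q. X (j + q * k) \<omega>" "{..<p}"]
    sum_mono[of "{..<p}" "\<lambda>q. norm (X (j + q * k) \<omega>)" "\<lambda>_. c"] bounded by simp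

lemma integral_cosh_norm_le_rho:
  assumes j: "1 \<le> j" and \<mu>: "0 \<le> \<mu>"
  shows "(\<integral>\<omega>. cosh (\<mu> * norm (X j \<omega>)) \<partial>M) \<le> rho \<mu>"
proof -
  have [measurable]: "X j \<in> borel_measurable M" by (rule meas)
  have X: "norm (X j \<omega>) \<le> c" if "\<omega> \<in> space M" for \<omega> using bounded[OF j that] .
  let ?Q = "\<mu>\<^sup>2 * B_norm / 2 * exp (\<mu> * c)"
  have int_X2: "integrable M (\<lambda>\<omega>. (norm (X j \<omega>))\<^sup>2)"
    using X by (intro integrable_const_bound[where B="c\<^sup>2"] AE_I2) (auto intro!: power_mono)
  have "(\<integral>\<omega>. cosh (\<mu> * norm (X j \<omega>)) \<partial>M) \<le> (\<integral>\<omega>. 1 + ?Q * (norm (X j \<omega>))\<^sup>2 \<partial>M)"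
  proof (rule integral_mono)
    show "integrable M (\<lambda>\<omega>. cosh (\<mu> * norm (X j \<omega>)))"
      using integrable_cosh_norm[OF _ X \<mu>] by simp
    show "integrable M (\<lambda>\<omega>. 1 + ?Q * (norm (X j \<omega>))\<^sup>2)" using int_X2 by auto
    fix \<omega> assume "\<omega> \<in> space M"
    have "exp (\<mu> * norm (X j \<omega>)) \<le> exp (\<mu> * c)" using X[OF \<open>\<omega> \<in> space M\<close>] \<mu> by (simp add: mult_left_mono)
    then have "\<mu>\<^sup>2 * B_norm * (norm (X j \<omega>))\<^sup>2 / 2 * exp (\<mu> * norm (X j \<omega>))
        \<le> \<mu>\<^sup>2 * B_norm * (norm (X j \<omega>))\<^sup>2 / 2 * exp (\<mu> * c)"
      using B_norm_ge_1 by (intro mult_left_mono) auto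
    then show "cosh (\<mu> * norm (X j \<omega>)) \<le> 1 + ?Q * (norm (X j \<omega>))\<^sup>2"
      using cosh_norm_add_le[OF \<mu>, of 0 "X j \<omega>"] by (simp add: mult_ac)
  qed
  also have "\<dots> = 1 + ?Q * (\<integral>\<omega>. (norm (X j \<omega>))\<^sup>2 \<partial>M)" using int_X2 by (simp add: prob_space)
  also have "\<dots> \<le> 1 + ?Q * sigma2_tilde"
    using A2_var[OF j] C2_nonneg Phi_nonneg B_norm_ge_1 unfolding sigma2_tilde_def
    by (intro add_left_mono mult_left_mono) (auto intro: order.trans[OF _ le_add_same_cancel1[THEN iffD2]])
  also have "\<dots> \<le> rho \<mu>" unfolding rho_def using \<mu> m_tilde_nonneg by (simp add: mult_ac)
  finally show ?thesis .
qed

lemma integral_cosh_stride_sum_le: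
  assumes j: "1 \<le> j" and \<mu>: "0 \<le> \<mu>"
  shows "(\<integral>\<omega>. cosh (\<mu> * norm (stride_sum j p \<omega>)) \<partial>M) \<le> rho \<mu> ^ p"
proof (induction p)
  case 0 then show ?case by (simp add: stride_sum_def prob_space)
next
  case (Suc p)
  show ?case
  proof (cases p)
    case 0
    then show ?thesis using integral_cosh_norm_le_rho[OF j \<mu>] by (simp add: stride_sum_def)
  next
    case (Suc p')
    have "stride_sum j (Suc p) \<omega> = stride_sum j p \<omega> + X ((j + p' * k) + k) \<omega>" for \<omega>
      unfolding stride_sum_def using Suc by (simp add: algebra_simps)
    then have "(\<integral>\<omega>. cosh (\<mu> * norm (stride_sum j (Suc p) \<omega>)) \<partial>M)
        \<le> (\<integral>\<omega>. cosh (\<mu> * norm (stride_sum j p \<omega>)) \<partial>M) * rho \<mu>"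
      using integral_cosh_norm_add_le[OF _ norm_stride_sum_le[OF j] _ \<mu>]
        borel_measurable_stride_sum[OF j, of p'] Suc j by simp
    also have "\<dots> \<le> rho \<mu> ^ p * rho \<mu>" using Suc.IH rho_nonneg[OF \<mu>] by (rule mult_right_mono)
    finally show ?thesis by (simp add: mult.commute)
  qed
qed

end

section \<open>Optimizing the exponent\<close>

lemma mult_exp_le_twice_sum:
  fixes D s :: real
  assumes D: "0 < D" and s: "0 \<le> s"
  shows "D * exp (3 * s / (2 * (D + s))) \<le> 2 * (D + s)"
proof -
  define z where "z = 3 * s / (4 * (D + s))"
  have z0: "0 \<le> z" unfolding z_def using D s by simp
  have z1: "z < 1" unfolding z_def using D s by (simp add: field_simps)
  have "1 - z \<le> exp (- z)" using exp_ge_add_one_self[of "-z"] by simp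
  then have ez: "exp z \<le> 1 / (1 - z)" using z1 by (simp add: exp_minus field_simps)
  have Ds: "D + s \<noteq> 0" using D s by simp
  have gen: "\<And>X::real. X \<noteq> 0 \<Longrightarrow> 3 * s / (2 * X) = 3 * s / (4 * X) + 3 * s / (4 * X)"
    by (simp add: add_divide_distrib[symmetric])
  have zz: "3 * s / (2 * (D + s)) = z + z" unfolding z_def by (rule gen[OF Ds])
  have "exp (3 * s / (2 * (D + s))) = (exp z)\<^sup>2"
    unfolding zz exp_add by (simp add: power2_eq_square)
  also have "\<dots> \<le> (1 / (1 - z))\<^sup>2" using ez by (intro power_mono) auto
  also have "1 - z = (4 * D + s) / (4 * (D + s))" unfolding z_def using D s by (simp add: field_simps)
  finally have e: "exp (3 * s / (2 * (D + s))) \<le> (4 * (D + s) / (4 * D + s))\<^sup>2" by simp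
  have "D * (4 * (D + s) / (4 * D + s))\<^sup>2 \<le> 2 * (D + s)"
  proof -
    have p: "0 < 4 * D + s" using D s by simp
    have h: "8 * D * (D + s) \<le> (4 * D + s)\<^sup>2" by (simp add: power2_eq_square algebra_simps)
    have h2: "2 * (D + s) * (8 * D * (D + s)) \<le> 2 * (D + s) * (4 * D + s)\<^sup>2"
      using h D s by (intro mult_left_mono) auto
    have eq: "2 * (D + s) * (8 * D * (D + s)) = D * (16 * (D + s)\<^sup>2)" by (simp add: power2_eq_square algebra_simps)
    have h3: "D * (16 * (D + s)\<^sup>2) \<le> (4 * D + s)\<^sup>2 * (2 * (D + s))" using h2 unfolding eq by (simp only: mult.commute)
    have eq2: "D * (4 * (D + s) / (4 * D + s))\<^sup>2 = D * (16 * (D + s)\<^sup>2) / (4 * D + s)\<^sup>2"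
      by (simp add: power_divide power_mult_distrib power2_eq_square algebra_simps)
    have p2: "0 < (4 * D + s)\<^sup>2" using p by simp
    show ?thesis unfolding eq2 using h3 p2 by (simp add: divide_le_eq mult.commute)
  qed
  moreover have "D * exp (3 * s / (2 * (D + s))) \<le> D * (4 * (D + s) / (4 * D + s))\<^sup>2"
    using e D by (simp add: mult_left_mono)
  ultimately show ?thesis by linarith
qed

lemma bernstein_exponent_le:
  fixes mt D c t :: real
  assumes mt: "0 \<le> mt" and D: "0 < D" and c: "0 < c" and t: "0 < t"
  defines "u \<equiv> t / (2 * (D + t * c / 3))"
  shows "u * mt + u\<^sup>2 * D * exp (u * c) / 2 - u * t \<le> - (t\<^sup>2 - 4 * mt * t) / (4 * (t * c / 3 + D))"
proof -
  define s where "s = t * c / 3"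
  have s0: "0 \<le> s" unfolding s_def using c t by simp
  have Ds: "0 < D + s" using D s0 by simp
  have u0: "0 < u" unfolding u_def using t Ds s_def by simp
  have uc: "u * c = 3 * s / (2 * (D + s))" unfolding u_def s_def using Ds s_def by (simp add: field_simps)
  have eb: "D * exp (u * c) \<le> 2 * (D + s)" unfolding uc by (rule mult_exp_le_twice_sum[OF D s0])
  have "u * (D * exp (u * c)) \<le> u * (2 * (D + s))" using eb u0 by (intro mult_left_mono) auto
  also have "u * (2 * (D + s)) = t" unfolding u_def s_def using Ds s_def by (simp add: field_simps)
  finally have a: "u * (D * exp (u * c)) \<le> t" .
  have b: "u\<^sup>2 * D * exp (u * c) / 2 \<le> u * t / 2"
  proof -
    have "u\<^sup>2 * D * exp (u * c) = u * (u * (D * exp (u * c)))" by (simp add: power2_eq_square mult_ac)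
    also have "\<dots> \<le> u * t" using a u0 by (intro mult_left_mono) auto
    finally show ?thesis by simp
  qed
  have key: "u * (2 * (D + s)) = t" unfolding u_def s_def using Ds s_def by (simp add: field_simps)
  have e1: "(- u * t / 2 + 2 * u * mt) * (4 * (D + s)) = - t * (u * (2 * (D + s))) + 4 * mt * (u * (2 * (D + s)))"
    by (simp add: algebra_simps)
  have e2: "(- u * t / 2 + 2 * u * mt) * (4 * (D + s)) = - (t\<^sup>2 - 4 * mt * t)"
    unfolding e1 key by (simp add: power2_eq_square algebra_simps)
  have r: "- (t\<^sup>2 - 4 * mt * t) / (4 * (t * c / 3 + D)) = - u * t / 2 + 2 * u * mt"
  proof -
    have "t * c / 3 + D = D + s" unfolding s_def by simp
    then show ?thesis using e2 Ds by (simp add: divide_eq_eq add.commute)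
  qed
  have "u * mt \<le> 2 * u * mt" using u0 mt by simp
  then show ?thesis unfolding r using b by linarith
qed

lemma bernstein_exponent_ge:
  fixes m D c l \<nu> :: real
  assumes m: "0 \<le> m" and D: "0 < D" and c: "0 < c" and l: "0 < l" and \<nu>: "0 < \<nu>"
  defines "t \<equiv> 4 * m + 4 * sqrt (D * \<nu> / l) + 4 / 3 * (c * \<nu> / l)"
  shows "\<nu> \<le> l * (t\<^sup>2 - 4 * m * t) / (4 * (t * c / 3 + D))"
proof -
  define \<rho> where "\<rho> = sqrt (D * \<nu> / l)"
  have "\<rho> * \<rho> = D * \<nu> / l" unfolding \<rho>_def using D \<nu> l by simp
  then have \<rho>: "0 \<le> \<rho>" "l * \<rho> * \<rho> = D * \<nu>" unfolding \<rho>_def using D \<nu> l by (simp_all add: field_simps)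
  have "0 < 4 / 3 * (c * \<nu> / l)" using c \<nu> l by simp
  then have t: "0 < t" "4 * \<rho> \<le> t" using m \<rho>(1) by (simp_all add: t_def \<rho>_def[symmetric])
  have "l * (4 * \<rho>) * \<rho> \<le> l * t * \<rho>" using t l \<rho> by (intro mult_right_mono mult_left_mono) auto
  then have "4 * (D * \<nu>) \<le> l * t * \<rho>" using \<rho>(2) by (simp add: mult_ac)
  moreover have "0 \<le> D * \<nu>" using D \<nu> by simp
  ultimately have "4 * \<nu> * (t * c / 3 + D) \<le> 4 * (l * t * \<rho>) + 4 / 3 * c * \<nu> * t"
    by (simp add: algebra_simps)
  also have "\<dots> = l * (t\<^sup>2 - 4 * m * t)"
    unfolding t_def \<rho>_def[symmetric] using l by (simp add: field_simps power2_eq_square)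
  finally have "\<nu> * (4 * (t * c / 3 + D)) \<le> l * (t\<^sup>2 - 4 * m * t)" by (simp only: mult_ac)
  moreover have "0 < 4 * (t * c / 3 + D)" using t c D by (simp add: add_pos_pos)
  ultimately show ?thesis by (simp add: pos_le_divide_eq)
qed

context banach_C_mixing_process
begin

lemma integral_cosh_stride_mean_le:
  assumes j: "1 \<le> j" and Lam: "0 < Lam" and l: "0 < l" and lL: "l \<le> real L"
  shows "(\<integral>\<omega>. cosh (Lam / L * norm (stride_sum j L \<omega>)) \<partial>M)
    \<le> exp (Lam * m_tilde + Lam\<^sup>2 * B_norm * sigma2_tilde * exp (Lam * c / l) / (2 * l))"
proof -
  have L: "0 < real L" using l lL by linarith
  have \<mu>: "0 \<le> Lam / L" using Lam L by simp
  have "(\<integral>\<omega>. cosh (Lam / L * norm (stride_sum j L \<omega>)) \<partial>M) \<le> rho (Lam / L) ^ L"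
    by (rule integral_cosh_stride_sum_le[OF j \<mu>])
  also have "\<dots> \<le> exp (rho (Lam / L) - 1) ^ L"
    using rho_nonneg[OF \<mu>] exp_ge_add_one_self[of "rho (Lam / L) - 1"] by (intro power_mono) auto
  also have "\<dots> = exp (Lam * m_tilde + Lam\<^sup>2 * B_norm * sigma2_tilde * (exp (Lam * c / L) / L) / 2)"
    unfolding rho_def using L by (simp add: exp_of_nat_mult[symmetric] field_simps power2_eq_square)
  also have "\<dots> \<le> exp (Lam * m_tilde + Lam\<^sup>2 * B_norm * sigma2_tilde * (exp (Lam * c / l) / l) / 2)"
  proof -
    have "exp (Lam * c / L) \<le> exp (Lam * c / l)"
      using Lam c_pos lL l by (simp add: divide_left_mono)
    then have "exp (Lam * c / L) / L \<le> exp (Lam * c / l) / l"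
      using L l lL by (meson exp_ge_zero frac_le)
    moreover have "0 \<le> Lam\<^sup>2 * B_norm * sigma2_tilde" using B_norm_ge_1 sigma2_tilde_pos by simp
    ultimately have "Lam\<^sup>2 * B_norm * sigma2_tilde * (exp (Lam * c / L) / L)
        \<le> Lam\<^sup>2 * B_norm * sigma2_tilde * (exp (Lam * c / l) / l)"
      by (rule mult_left_mono)
    then show ?thesis by (intro iffD2[OF exp_le_cancel_iff] add_left_mono divide_right_mono) simp_all
  qed
  finally show ?thesis by (simp add: field_simps)
qed

lemma cosh_norm_mean_le:
  assumes k: "1 \<le> k" "k \<le> n" and Lam: "0 \<le> Lam"
  shows "cosh (Lam * ((1 / real n) * norm (\<Sum>i=1..n. X i \<omega>)))
    \<le> (\<Sum>j\<in>{1..k}. stride_len k n j / n * cosh (Lam / stride_len k n j * norm (stride_sum j (stride_len k n j) \<omega>)))"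
proof -
  let ?L = "stride_len k n"
  let ?x = "Lam * ((1 / real n) * norm (\<Sum>i=1..n. X i \<omega>))"
  let ?y = "\<Sum>j\<in>{1..k}. ?L j / n * (Lam / ?L j * norm (stride_sum j (?L j) \<omega>))"
  have "?x = Lam * ((1 / real n) * norm (\<Sum>j\<in>{1..k}. stride_sum j (?L j) \<omega>))"
    unfolding stride_sum_def using sum_stride_reindex[OF k, of "\<lambda>i. X i \<omega>"] by simp
  also have "\<dots> \<le> Lam * ((1 / real n) * (\<Sum>j\<in>{1..k}. norm (stride_sum j (?L j) \<omega>)))"
    using norm_sum Lam by (intro mult_left_mono) auto
  also have "\<dots> = ?y"
    by (auto simp: sum_distrib_left stride_len_def intro!: sum.cong)
  finally have le: "?x \<le> ?y" .
  moreover have "0 \<le> ?x" using Lam by simp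
  ultimately have "cosh ?x \<le> cosh ?y"
    using cosh_real_nonneg_le_iff[of ?x ?y] by linarith
  also have "\<dots> \<le> (\<Sum>j\<in>{1..k}. ?L j / n * cosh (Lam / ?L j * norm (stride_sum j (?L j) \<omega>)))"
    using k stride_lengths(1)[of n 1 k 0] sum_stride_reindex[OF k, of "\<lambda>_. 1::nat"]
    by (intro cosh_sum_convex) (auto simp: sum_divide_distrib[symmetric] of_nat_sum[symmetric])
  finally show ?thesis .
qed

lemma integral_cosh_mean_le:
  assumes n: "n = l * k + r" and l: "1 < l" and k: "1 < k" and Lam: "0 < Lam"
  defines "Z \<equiv> \<lambda>\<omega>. cosh (Lam * ((1 / real n) * norm (\<Sum>i=1..n. X i \<omega>)))"
  shows "integrable M Z"
    and "(\<integral>\<omega>. Z \<omega> \<partial>M) \<le> exp (Lam * m_tilde + Lam\<^sup>2 * B_norm * sigma2_tilde * exp (Lam * c / l) / (2 * l))"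
proof -
  let ?L = "stride_len k n"
  let ?\<Psi> = "Lam * m_tilde + Lam\<^sup>2 * B_norm * sigma2_tilde * exp (Lam * c / l) / (2 * l)"
  define a where "a j \<omega> = cosh (Lam / ?L j * norm (stride_sum j (?L j) \<omega>))" for j \<omega>
  have "k \<le> n" using n l by (metis add_increasing2 le_add1 less_imp_le_nat mult_le_mono1 mult_1 zero_le)
  then have n0: "0 < n" using k by simp
  note L = stride_lengths[OF n less_imp_le[OF l] less_imp_le[OF k]]
  have [measurable]: "Z \<in> borel_measurable M" "\<And>j. a j \<in> borel_measurable M"
    unfolding Z_def a_def stride_sum_def using meas by measurable
  have int_a: "integrable M (a j)" if "j \<in> {1..k}" for j
  proof (intro integrable_const_bound[where B="cosh (Lam * c)"] AE_I2)
    fix \<omega> assume "\<omega> \<in> space M"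
    then have "Lam / ?L j * norm (stride_sum j (?L j) \<omega>) \<le> Lam / ?L j * (?L j * c)"
      using norm_stride_sum_le[of j \<omega> "?L j"] that Lam by (intro mult_left_mono) auto
    then show "norm (a j \<omega>) \<le> cosh (Lam * c)"
      using Lam c_pos by (simp add: a_def stride_len_def cosh_real_nonneg_le_iff)
  qed measurable
  show "integrable M Z"
  proof (intro integrable_const_bound[where B="cosh (Lam * c)"] AE_I2)
    fix \<omega> assume \<omega>: "\<omega> \<in> space M"
    have "norm (\<Sum>i=1..n. X i \<omega>) \<le> (\<Sum>i=1..n. norm (X i \<omega>))" by (rule norm_sum)
    also have "\<dots> \<le> (\<Sum>i=1..n. c)" using bounded \<omega> by (intro sum_mono) auto
    finally have "Lam * ((1 / real n) * norm (\<Sum>i=1..n. X i \<omega>)) \<le> Lam * c"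
      using n0 Lam by (intro mult_left_mono) (auto simp: field_simps)
    then show "norm (Z \<omega>) \<le> cosh (Lam * c)"
      unfolding Z_def using Lam c_pos by (simp add: cosh_real_nonneg_le_iff)
  qed measurable
  then have "(\<integral>\<omega>. Z \<omega> \<partial>M) \<le> (\<integral>\<omega>. (\<Sum>j\<in>{1..k}. ?L j / n * a j \<omega>) \<partial>M)"
    using int_a cosh_norm_mean_le[OF _ \<open>k \<le> n\<close>] k Lam unfolding Z_def a_def
    by (intro integral_mono) auto
  also have "\<dots> = (\<Sum>j\<in>{1..k}. ?L j / n * (\<integral>\<omega>. a j \<omega> \<partial>M))"
    using int_a by (simp add: Bochner_Integration.integral_sum)
  also have "\<dots> \<le> (\<Sum>j\<in>{1..k}. ?L j / n * exp ?\<Psi>)"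
    using integral_cosh_stride_mean_le[OF _ Lam, of _ l] L(2) l unfolding a_def
    by (intro sum_mono mult_left_mono) auto
  also have "\<dots> = exp ?\<Psi>"
    using L(1) n0 by (simp add: sum_distrib_right[symmetric] sum_divide_distrib[symmetric] of_nat_sum[symmetric])
  finally show "(\<integral>\<omega>. Z \<omega> \<partial>M) \<le> exp ?\<Psi>" .
qed

end

context banach_C_mixing_process
begin

lemma tail_bound_exp:
  assumes n: "n = l * k + r" and l: "1 < l" and k: "1 < k" and Lam: "0 < Lam" and t: "0 \<le> t"
  shows "prob {\<omega> \<in> space M. t \<le> (1 / real n) * norm (\<Sum>i=1..n. X i \<omega>)}
    \<le> 2 * exp (Lam * m_tilde + Lam\<^sup>2 * B_norm * sigma2_tilde * exp (Lam * c / l) / (2 * l) - Lam * t)"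
proof -
  have "prob {\<omega> \<in> space M. t \<le> (1 / real n) * norm (\<Sum>i=1..n. X i \<omega>)}
      \<le> 2 * exp (- Lam * t) * (\<integral>\<omega>. cosh (Lam * ((1 / real n) * norm (\<Sum>i=1..n. X i \<omega>))) \<partial>M)"
    using meas Lam t integral_cosh_mean_le(1)[OF n l k Lam] by (intro prob_ge_le_exp_cosh) auto
  also have "\<dots> \<le> 2 * exp (- Lam * t)
      * exp (Lam * m_tilde + Lam\<^sup>2 * B_norm * sigma2_tilde * exp (Lam * c / l) / (2 * l))"
    using integral_cosh_mean_le(2)[OF n l k Lam] by (intro mult_left_mono) auto
  finally show ?thesis by (simp add: mult.assoc exp_add[symmetric])
qed

lemma tail_bound:
  assumes n: "n = l * k + r" and l: "1 < l" and k: "1 < k" and t: "0 < t"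
  shows "prob {\<omega> \<in> space M. t \<le> (1 / real n) * norm (\<Sum>i=1..n. X i \<omega>)}
    \<le> 2 * exp (- (real l * (t\<^sup>2 - 4 * m_tilde * t)) / (4 * (t * c / 3 + sigma2_tilde * B_norm)))"
proof -
  define D where "D = sigma2_tilde * B_norm"
  define u where "u = t / (2 * (D + t * c / 3))"
  have D: "0 < D" unfolding D_def using sigma2_tilde_pos B_norm_ge_1 by simp
  then have u: "0 < u" unfolding u_def using t c_pos by (simp add: add_pos_nonneg)
  have "prob {\<omega> \<in> space M. t \<le> (1 / real n) * norm (\<Sum>i=1..n. X i \<omega>)}
      \<le> 2 * exp (real l * (u * m_tilde + u\<^sup>2 * D * exp (u * c) / 2 - u * t))"
    using tail_bound_exp[OF n l k _ less_imp_le[OF t], of "u * l"] u l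
    by (simp add: D_def field_simps power2_eq_square)
  also have "\<dots> \<le> 2 * exp (- (real l * (t\<^sup>2 - 4 * m_tilde * t)) / (4 * (t * c / 3 + D)))"
  proof -
    have "u * m_tilde + u\<^sup>2 * D * exp (u * c) / 2 - u * t \<le> - (t\<^sup>2 - 4 * m_tilde * t) / (4 * (t * c / 3 + D))"
      unfolding u_def by (rule bernstein_exponent_le[OF m_tilde_nonneg D c_pos t])
    then have "real l * (u * m_tilde + u\<^sup>2 * D * exp (u * c) / 2 - u * t)
        \<le> real l * (- (t\<^sup>2 - 4 * m_tilde * t) / (4 * (t * c / 3 + D)))"
      by (intro mult_left_mono) auto
    moreover have "real l * (- (t\<^sup>2 - 4 * m_tilde * t) / (4 * (t * c / 3 + D)))
        = - (real l * (t\<^sup>2 - 4 * m_tilde * t)) / (4 * (t * c / 3 + D))"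
      by (simp only: minus_divide_left mult_minus_right times_divide_eq_right)
    ultimately show ?thesis by simp
  qed
  finally show ?thesis unfolding D_def .
qed

lemma tail_bound_threshold:
  assumes n: "n = l * k + r" and l: "1 < l" and k: "1 < k" and \<nu>: "0 < \<nu>"
  shows "prob {\<omega> \<in> space M. 4 * m_tilde + 4 * sqrt (B_norm * sigma2_tilde * \<nu> / real l) + 4 / 3 * (c * \<nu> / real l)
      \<le> norm ((1 / real n) *\<^sub>R (\<Sum>i=1..n. X i \<omega>))} \<le> 2 * exp (- \<nu>)"
proof -
  define t where "t = 4 * m_tilde + 4 * sqrt (B_norm * sigma2_tilde * \<nu> / real l) + 4 / 3 * (c * \<nu> / real l)"
  have "0 < B_norm * sigma2_tilde" using B_norm_ge_1 sigma2_tilde_pos by simp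
  from bernstein_exponent_ge[OF m_tilde_nonneg this c_pos _ \<nu>, of "real l"] l
  have "\<nu> \<le> real l * (t\<^sup>2 - 4 * m_tilde * t) / (4 * (t * c / 3 + B_norm * sigma2_tilde))"
    unfolding t_def by simp
  then have "\<nu> \<le> real l * (t\<^sup>2 - 4 * m_tilde * t) / (4 * (t * c / 3 + sigma2_tilde * B_norm))"
    by (simp only: mult.commute[of B_norm sigma2_tilde])
  moreover have "0 < t" unfolding t_def using m_tilde_nonneg c_pos \<nu> l \<open>0 < B_norm * sigma2_tilde\<close>
    by (intro add_nonneg_pos add_nonneg_nonneg) auto
  ultimately show ?thesis
    using tail_bound[OF n l k \<open>0 < t\<close>] unfolding t_def[symmetric]
    by (simp add: minus_divide_left[symmetric] order_trans)
qed

end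

theorem lemmaA3:
  fixes M :: "'w measure"
    and X :: "nat \<Rightarrow> 'w \<Rightarrow> 'b::{banach, second_countable_topology}"
    and Cset :: "('b \<Rightarrow> real) set"
    and Cnorm :: "('b \<Rightarrow> real) \<Rightarrow> real"
    and c sigma2 A1 A2 C1 C2 :: real
    and n l k r :: nat
  assumes prob: "prob_space M"
    and meas: "\<And>i. X i \<in> borel_measurable M"
    and c_pos: "c > 0"
    and bounded: "\<And>i \<omega>. i \<ge> 1 \<Longrightarrow> \<omega> \<in> space M \<Longrightarrow> norm (X i \<omega>) \<le> c"
    and centered: "\<And>i. i \<ge> 1 \<Longrightarrow> (\<integral>\<omega>. X i \<omega> \<partial>M) = 0"
    and C_supp: "\<And>f x. f \<in> Cset \<Longrightarrow> norm x > c \<Longrightarrow> f x = 0"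
    and C_bdd: "\<And>f. f \<in> Cset \<Longrightarrow> bounded (f ` cball 0 c)"
    and C_borel: "\<And>f. f \<in> Cset \<Longrightarrow> f \<in> borel_measurable borel"
    and C_zero: "(\<lambda>x. 0) \<in> Cset"
    and C_add: "\<And>f g. f \<in> Cset \<Longrightarrow> g \<in> Cset \<Longrightarrow> (\<lambda>x. f x + g x) \<in> Cset"
    and C_scale: "\<And>f a. f \<in> Cset \<Longrightarrow> (\<lambda>x. a * f x) \<in> Cset"
    and C_closed: "\<And>fs g. (\<forall>m. fs m \<in> Cset) \<Longrightarrow> (\<forall>x. norm x > c \<longrightarrow> g x = 0) \<Longrightarrow>
                     bounded (g ` cball 0 c) \<Longrightarrow>
                     (\<lambda>m. SUP x\<in>cball 0 c. \<bar>fs m x - g x\<bar>) \<longlonglongrightarrow> 0 \<Longrightarrow> g \<in> Cset"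
    and Cn_nonneg: "\<And>f. f \<in> Cset \<Longrightarrow> Cnorm f \<ge> 0"
    and Cn_add: "\<And>f g. f \<in> Cset \<Longrightarrow> g \<in> Cset \<Longrightarrow> Cnorm (\<lambda>x. f x + g x) \<le> Cnorm f + Cnorm g"
    and Cn_scale: "\<And>f a. f \<in> Cset \<Longrightarrow> Cnorm (\<lambda>x. a * f x) = \<bar>a\<bar> * Cnorm f"
    and A1_ge: "A1 \<ge> 1" and A2_pos: "A2 > 0"
    and A1_diff: "\<And>(x::'b) v. x \<noteq> 0 \<Longrightarrow> twice_gateaux_diff norm x v"
    and A1_d1: "\<And>(x::'b) v. x \<noteq> 0 \<Longrightarrow> \<bar>gateaux1 norm x v\<bar> \<le> A1 * norm v"
    and A1_d2: "\<And>(x::'b) v. x \<noteq> 0 \<Longrightarrow> \<bar>gateaux2 norm x v\<bar> \<le> A2 * (norm v)\<^sup>2 / norm x"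
    and sigma2_pos: "sigma2 > 0"
    and A2_var: "\<And>i. i \<ge> 1 \<Longrightarrow> (\<integral>\<omega>. (norm (X i \<omega>))\<^sup>2 \<partial>M) \<le> sigma2"
    and C1_nonneg: "C1 \<ge> 0" and C2_nonneg: "C2 \<ge> 0"
    and A3_lin: "\<And>s. bounded_linear s \<Longrightarrow> (\<lambda>x. if norm x \<le> c then s x else 0) \<in> Cset"
    and A3_lin_bd: "\<And>s. bounded_linear s \<Longrightarrow> onorm s \<le> 1 \<Longrightarrow>
                      Cnorm (\<lambda>x. if norm x \<le> c then s x else 0) \<le> C1"
    and A3_sq: "(\<lambda>x. if norm x \<le> c then (norm x)\<^sup>2 else 0) \<in> Cset"
    and A3_sq_bd: "Cnorm (\<lambda>x. if norm x \<le> c then (norm x)\<^sup>2 else 0) \<le> C2"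
    and n_def: "n = l * k + r" and l_gt: "l > 1" and k_gt: "k > 1" and r_lt: "r < k"
    and Phi_fin: "C_mixing_coeff M X Cset Cnorm k \<noteq> \<infinity>"
  shows "let Phi = real_of_ereal (C_mixing_coeff M X Cset Cnorm k);
             mt = C1 * A1 * Phi; st2 = sigma2 + C2 * Phi; B = A1\<^sup>2 + A2 in
         (\<forall>t>0. \<P>(\<omega> in M. (1 / real n) * norm (\<Sum>i=1..n. X i \<omega>) \<ge> t)
                 \<le> 2 * exp (- (real l * (t\<^sup>2 - 4 * mt * t)) / (4 * (t * c / 3 + st2 * B)))) \<and>
         (\<forall>\<nu>>0. \<P>(\<omega> in M. norm ((1 / real n) *\<^sub>R (\<Sum>i=1..n. X i \<omega>))
                   \<ge> 4 * mt + 4 * sqrt (B * st2 * \<nu> / real l) + 4 / 3 * (c * \<nu> / real l))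
                 \<le> 2 * exp (- \<nu>))"
proof -
  interpret banach_C_mixing_process M X Cset Cnorm c k sigma2 A1 A2 C1 C2
    by (intro banach_C_mixing_process.intro C_mixing_process.intro C_mixing_process_axioms.intro
        banach_C_mixing_process_axioms.intro prob) (rule assms; assumption?)+
  show ?thesis
    using tail_bound[OF n_def l_gt k_gt] tail_bound_threshold[OF n_def l_gt k_gt]
    unfolding Let_def Phi_def[symmetric] m_tilde_def[symmetric] sigma2_tilde_def[symmetric]
      B_norm_def[symmetric] by auto
qed

end
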